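(* Consider a sequence of problems indexed by $n$, with $p=p_n$ and a distribution of $(X,Y)$ possibly depending on $n$. For each $n$, let $(X_1,Y_1),\dots,(X_n,Y_n)$ be i.i.d. copies of $(X,Y)$, $X\in\mathbb{R}^p$, $Y\in\mathbb{R}$, with $E(X)=0$, $\mathrm{Var}(X)=\mathbf{I}$, $E(Y^2)<\infty$. Let $\beta=E(XY)$, $W=XY$, $W_i=X_iY_i$, $\mathbf{A}=E(WW^T)$, and $\hat\tau^2=\binom{n}{2}^{-1}\sum_{i_1<i_2}W_{i_1}^TW_{i_2}$. For $S\subseteq\{1,\dots,p\}$ let $h_S(x)=\sum_{j<j',\,j,j'\in S}x_jx_{j'}$. Let $\delta$ be a covariate selection procedure producing a (data-dependent) set $\mathbf{S}_\delta\subseteq\{1,\dots,p\}$, and write $h=h_{\mathbf{S}_\delta}$. Define $Z_h=\frac1n\sum_{i=1}^nh(X_i)$, $$\hat c_h^*=\frac{\binom{n}{2}^{-1}\sum_{i_1\ne i_2}W_{i_1}^TW_{i_2}h(X_{i_2})}{\mathrm{Var}[h(X)]},\qquad c_h^*=\frac{2\beta^T\theta_h}{\mathrm{Var}[h(X)]},\quad \theta_h=E[Wh(X)],$$ (where $\mathrm{Var}[h_S(X)]$ and $\theta_S=E[W h_S(X)]$ are computed for a fixed set $S$ and then evaluated at $S=\mathbf{S}_\delta$), and $T_{\hat h}=\hat\tau^2-\hat c_h^*Z_h$, $T_h=\hat\tau^2-c_h^*Z_h$. Assume $\delta$ is stable, i.e. there is a deterministic sequence $\Theta=\Theta_n\subseteq\{1,\dots,p\}$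 with $\lim_{n\to\infty}n[P(\mathbf{S}_\delta\ne\Theta)]^{1/2}=0$. Let $f=h_\Theta$, $\theta_f=E[Wf(X)]$, $c_f^*=2\beta^T\theta_f/\mathrm{Var}[f(X)]$, $\hat c_f^*=\frac{\frac{2}{n(n-1)}\sum_{i_1\ne i_2}W_{i_1}^TW_{i_2}f(X_{i_2})}{\mathrm{Var}[f(X)]}$, $Z_f=\frac1n\sum_{i=1}^nf(X_i)$, $T_f=\hat\tau^2-c_f^*Z_f$, $T_{\hat f}=\hat\tau^2-\hat c_f^*Z_f$, $b=Wf(X)$, $\mathbf{B}=E[WW^Tf(X)]$, $\mathbf{C}=E[WW^Tf^2(X)]$. Assume that $n/p$, $\|\beta\|^2$, $\|\theta_f\|^2/\mathrm{Var}[f(X)]$ and $E(\|b\|^2)/(n\mathrm{Var}[f(X)])$ are bounded; that $\|\mathbf{A}\|_F^2/n^2\to0$, $\|\mathbf{B}\|_F^2/(n^2\mathrm{Var}[f(X)])\to0$ and $\|\mathbf{C}\|_F^2/\{n\mathrm{Var}[f(X)]\}^2\to0$; and that the first four moments of $T_h,T_{\hat h},T_f,T_{\hat f}$ are bounded. Then $$\sqrt n\,(T_{\hat h}-T_h)\to0\ \text{in probability}.$$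
   Context: $\|\cdot\|_F$ is the Frobenius norm. Under $E(X)=0$, $\mathrm{Var}(X)=\mathbf I$, $\beta$ is the slope of the best linear predictor of $Y$ given $X$, $\hat\tau^2$ is an unbiased "naive" estimator of $\tau^2=\|\beta\|^2$, and $Z_h$, $Z_f$ are zero-mean statistics (zero-estimators) since the distribution of $X$ is known; $T_{\hat h}$ is the improved estimator and $T_h$ its oracle version with the optimal coefficient. Variances $\mathrm{Var}[f(X)]$, $\mathrm{Var}[h(X)]$ are assumed nonzero. *)

theory Defs
  imports "HOL-Probability.Probability"
begin

text \<open>An observation is a pair (x, y) with x :: nat => real (coordinates 1..p are used)
  and y :: real.\<close>

definition obsM :: "((nat \<Rightarrow> real) \<times> real) measure" where
  "obsM = (PiM UNIV (\<lambda>_::nat. (borel :: real measure))) \<Otimes>\<^sub>M (borel :: real measure)"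

definition hS :: "nat set \<Rightarrow> (nat \<Rightarrow> real) \<Rightarrow> real" where
  "hS S x = (\<Sum>(j, j') \<in> {(j, j'). j \<in> S \<and> j' \<in> S \<and> j < j'}. x j * x j')"

definition popvar :: "((nat \<Rightarrow> real) \<times> real) measure \<Rightarrow> ((nat \<Rightarrow> real) \<times> real \<Rightarrow> real) \<Rightarrow> real" where
  "popvar D g = (\<integral>z. (g z - (\<integral>z. g z \<partial>D))\<^sup>2 \<partial>D)"

definition beta :: "((nat \<Rightarrow> real) \<times> real) measure \<Rightarrow> nat \<Rightarrow> real" where
  "beta D j = (\<integral>z. fst z j * snd z \<partial>D)"

definition theta :: "((nat \<Rightarrow> real) \<times> real) measure \<Rightarrow> nat set \<Rightarrow> nat \<Rightarrow> real" where
  "theta D S j = (\<integral>z. fst z j * snd z * hS S (fst z) \<partial>D)"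

text \<open>Sample quantities; samples are obs 0, ..., obs (n-1); W_i = X_i Y_i.\<close>
definition Wdot :: "nat \<Rightarrow> (nat \<Rightarrow> (nat \<Rightarrow> real) \<times> real) \<Rightarrow> nat \<Rightarrow> nat \<Rightarrow> real" where
  "Wdot p obs i1 i2 = (\<Sum>j\<in>{1..p}. (fst (obs i1) j * snd (obs i1)) * (fst (obs i2) j * snd (obs i2)))"

definition tauhat :: "nat \<Rightarrow> nat \<Rightarrow> (nat \<Rightarrow> (nat \<Rightarrow> real) \<times> real) \<Rightarrow> real" where
  "tauhat p n obs = (1 / real (n choose 2)) *
     (\<Sum>i1<n. \<Sum>i2<n. if i1 < i2 then Wdot p obs i1 i2 else 0)"

definition Zbar :: "nat \<Rightarrow> ((nat \<Rightarrow> real) \<Rightarrow> real) \<Rightarrow> (nat \<Rightarrow> (nat \<Rightarrow> real) \<times> real) \<Rightarrow> real" where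
  "Zbar n g obs = (1 / real n) * (\<Sum>i<n. g (fst (obs i)))"

definition chat :: "((nat \<Rightarrow> real) \<times> real) measure \<Rightarrow> nat \<Rightarrow> nat \<Rightarrow> nat set \<Rightarrow>
    (nat \<Rightarrow> (nat \<Rightarrow> real) \<times> real) \<Rightarrow> real" where
  "chat D p n S obs =
     ((1 / real (n choose 2)) *
       (\<Sum>i1<n. \<Sum>i2<n. if i1 \<noteq> i2 then Wdot p obs i1 i2 * hS S (fst (obs i2)) else 0))
     / popvar D (\<lambda>z. hS S (fst z))"

definition cstar :: "((nat \<Rightarrow> real) \<times> real) measure \<Rightarrow> nat \<Rightarrow> nat set \<Rightarrow> real" where
  "cstar D p S = 2 * (\<Sum>j\<in>{1..p}. beta D j * theta D S j) / popvar D (\<lambda>z. hS S (fst z))"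

definition Thatstat :: "((nat \<Rightarrow> real) \<times> real) measure \<Rightarrow> nat \<Rightarrow> nat \<Rightarrow> nat set \<Rightarrow>
    (nat \<Rightarrow> (nat \<Rightarrow> real) \<times> real) \<Rightarrow> real" where
  "Thatstat D p n S obs = tauhat p n obs - chat D p n S obs * Zbar n (hS S) obs"

definition Tstat :: "((nat \<Rightarrow> real) \<times> real) measure \<Rightarrow> nat \<Rightarrow> nat \<Rightarrow> nat set \<Rightarrow>
    (nat \<Rightarrow> (nat \<Rightarrow> real) \<times> real) \<Rightarrow> real" where
  "Tstat D p n S obs = tauhat p n obs - cstar D p S * Zbar n (hS S) obs"

definition bounded_moments4 :: "(nat \<Rightarrow> 'a measure) \<Rightarrow> (nat \<Rightarrow> 'a \<Rightarrow> real) \<Rightarrow> bool" where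
  "bounded_moments4 M T \<longleftrightarrow>
     (\<forall>n. \<forall>k\<in>{1..4::nat}. integrable (M n) (\<lambda>\<omega>. T n \<omega> ^ k)) \<and>
     (\<forall>k\<in>{1..4::nat}. Bseq (\<lambda>n. \<integral>\<omega>. T n \<omega> ^ k \<partial>M n))"

end

theory Submission
  imports Defs
begin

text \<open>
  On the event \<open>S\<^sub>\<delta> = \<Theta>\<close> the selected function \<open>h\<close> equals \<open>f = h\<^sub>\<Theta>\<close>, and stability makes
  the complementary event negligible. So it suffices to show \<open>\<surd>n (T' - T) \<rightarrow> 0\<close> in probability,
  where \<open>T' - T = -(c' - c) Z\<^sub>f\<close> is the difference between the estimators of \<open>\<tau>\<^sup>2\<close> built with the
  estimated coefficient \<open>c' = \<hat>c\<^sup>*\<^sub>f\<close> and with the optimal one \<open>c = c\<^sup>*\<^sub>f\<close>, and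
  \<open>E(Z\<^sub>f\<^sup>2) = Var[f(X)]/n\<close>. By Hoeffding's decomposition \<open>Var[f(X)] (c' - c)\<close> is a degenerate
  U-statistic in the centred vectors \<open>W - \<beta>\<close> and \<open>b - \<theta>\<^sub>f\<close> plus an average of i.i.d. centred
  terms; its second moment is of order
  \<open>(\<parallel>A\<parallel>\<^sub>F \<parallel>C\<parallel>\<^sub>F + \<parallel>\<beta>\<parallel>\<^sup>2 \<parallel>\<theta>\<^sub>f\<parallel>\<^sup>2) / n\<^sup>2 + (\<parallel>\<theta>\<^sub>f\<parallel>\<^sup>2 \<parallel>A\<parallel>\<^sub>F + \<parallel>\<beta>\<parallel>\<^sup>2 \<parallel>C\<parallel>\<^sub>F) / n\<close>,
  which is \<open>o(Var[f(X)])\<close> under the hypotheses. Markov's and the Cauchy-Schwarz inequality give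
  \<open>P(\<surd>n |T' - T| > \<epsilon>) \<le> (E[(c' - c)\<^sup>2] Var[f(X)])\<^sup>1\<^sup>/\<^sup>2 / \<epsilon> \<rightarrow> 0\<close>.
\<close>

section \<open>Square-integrable functions\<close>

lemma abs_mult_le_sum_squares: "\<bar>a * b\<bar> \<le> a\<^sup>2 + b\<^sup>2" for a b :: real
proof -
  have "2 * \<bar>a\<bar> * \<bar>b\<bar> \<le> a\<^sup>2 + b\<^sup>2"
    using sum_squares_bound[of "\<bar>a\<bar>" "\<bar>b\<bar>"] by simp
  moreover have "0 \<le> \<bar>a\<bar> * \<bar>b\<bar>" by simp
  ultimately show ?thesis unfolding abs_mult by linarith
qed

lemma integrable_mult_of_square_integrable:
  fixes f g :: "'a \<Rightarrow> real"
  assumes "f \<in> borel_measurable M" "g \<in> borel_measurable M"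
    and "integrable M (\<lambda>x. (f x)\<^sup>2)" "integrable M (\<lambda>x. (g x)\<^sup>2)"
  shows "integrable M (\<lambda>x. f x * g x)"
proof (rule Bochner_Integration.integrable_bound)
  show "integrable M (\<lambda>x. (f x)\<^sup>2 + (g x)\<^sup>2)" using assms by auto
  show "(\<lambda>x. f x * g x) \<in> borel_measurable M" using assms by measurable
  show "AE x in M. norm (f x * g x) \<le> norm ((f x)\<^sup>2 + (g x)\<^sup>2)"
    using abs_mult_le_sum_squares by simp
qed

lemma integral_abs_mult_le_sqrt:
  fixes f g :: "'a \<Rightarrow> real"
  assumes [measurable]: "f \<in> borel_measurable M" "g \<in> borel_measurable M"
    and f2: "integrable M (\<lambda>x. (f x)\<^sup>2)" and g2: "integrable M (\<lambda>x. (g x)\<^sup>2)"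
  shows "(\<integral>x. \<bar>f x * g x\<bar> \<partial>M) \<le> sqrt (\<integral>x. (f x)\<^sup>2 \<partial>M) * sqrt (\<integral>x. (g x)\<^sup>2 \<partial>M)"
proof -
  have fg: "integrable M (\<lambda>x. \<bar>f x * g x\<bar>)"
    using integrable_mult_of_square_integrable[OF assms] by simp
  have sq: "(\<integral>\<^sup>+x. ennreal \<bar>h x\<bar> ^ 2 \<partial>M) = ennreal (\<integral>x. (h x)\<^sup>2 \<partial>M)"
    if "integrable M (\<lambda>x. (h x)\<^sup>2)" for h :: "'a \<Rightarrow> real"
    using nn_integral_eq_integral[OF that] by (simp add: ennreal_power)
  have "ennreal ((\<integral>x. \<bar>f x * g x\<bar> \<partial>M)\<^sup>2) = (\<integral>\<^sup>+x. ennreal \<bar>f x\<bar> * ennreal \<bar>g x\<bar> \<partial>M)\<^sup>2"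
    using nn_integral_eq_integral[OF fg] by (simp add: ennreal_mult' ennreal_power abs_mult)
  also have "\<dots> \<le> (\<integral>\<^sup>+x. ennreal \<bar>f x\<bar> ^ 2 \<partial>M) * (\<integral>\<^sup>+x. ennreal \<bar>g x\<bar> ^ 2 \<partial>M)"
    by (rule Cauchy_Schwarz_nn_integral) measurable
  also have "\<dots> = ennreal ((\<integral>x. (f x)\<^sup>2 \<partial>M) * (\<integral>x. (g x)\<^sup>2 \<partial>M))"
    by (simp add: sq f2 g2 ennreal_mult)
  finally have "(\<integral>x. \<bar>f x * g x\<bar> \<partial>M)\<^sup>2 \<le> (\<integral>x. (f x)\<^sup>2 \<partial>M) * (\<integral>x. (g x)\<^sup>2 \<partial>M)"
    by (subst (asm) ennreal_le_iff) (simp_all add: integral_nonneg_AE)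
  then have "sqrt ((\<integral>x. \<bar>f x * g x\<bar> \<partial>M)\<^sup>2) \<le> sqrt ((\<integral>x. (f x)\<^sup>2 \<partial>M) * (\<integral>x. (g x)\<^sup>2 \<partial>M))"
    by (rule real_sqrt_le_mono)
  then show ?thesis
    by (simp add: real_sqrt_mult integral_nonneg_AE)
qed

lemma integral_square_add_le:
  fixes a b :: "'a \<Rightarrow> real"
  assumes "a \<in> borel_measurable M" "b \<in> borel_measurable M"
    and "integrable M (\<lambda>x. (a x)\<^sup>2)" "integrable M (\<lambda>x. (b x)\<^sup>2)"
  shows "integrable M (\<lambda>x. (a x + b x)\<^sup>2)"
    and "(\<integral>x. (a x + b x)\<^sup>2 \<partial>M) \<le> 2 * (\<integral>x. (a x)\<^sup>2 \<partial>M) + 2 * (\<integral>x. (b x)\<^sup>2 \<partial>M)"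
proof -
  have eq: "(\<lambda>x. (a x + b x)\<^sup>2) = (\<lambda>x. (a x)\<^sup>2 + 2 * (a x * b x) + (b x)\<^sup>2)"
    by (simp add: power2_eq_square algebra_simps)
  show int: "integrable M (\<lambda>x. (a x + b x)\<^sup>2)"
    unfolding eq using integrable_mult_of_square_integrable[OF assms] assms by auto
  have "(\<integral>x. (a x + b x)\<^sup>2 \<partial>M) \<le> (\<integral>x. 2 * (a x)\<^sup>2 + 2 * (b x)\<^sup>2 \<partial>M)"
  proof (rule integral_mono[OF int])
    show "integrable M (\<lambda>x. 2 * (a x)\<^sup>2 + 2 * (b x)\<^sup>2)" using assms by auto
    show "(a x + b x)\<^sup>2 \<le> 2 * (a x)\<^sup>2 + 2 * (b x)\<^sup>2" for x
      using sum_squares_bound[of "a x" "b x"] by (simp add: power2_eq_square algebra_simps)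
  qed
  also have "\<dots> = 2 * (\<integral>x. (a x)\<^sup>2 \<partial>M) + 2 * (\<integral>x. (b x)\<^sup>2 \<partial>M)" using assms by simp
  finally show "(\<integral>x. (a x + b x)\<^sup>2 \<partial>M) \<le> 2 * (\<integral>x. (a x)\<^sup>2 \<partial>M) + 2 * (\<integral>x. (b x)\<^sup>2 \<partial>M)" .
qed

lemma integral_square_linear_combination:
  fixes g :: "'j \<Rightarrow> 'a \<Rightarrow> real"
  assumes "\<And>j. g j \<in> borel_measurable M" and "\<And>j. j \<in> J \<Longrightarrow> integrable M (\<lambda>x. (g j x)\<^sup>2)"
  shows "integrable M (\<lambda>x. (\<Sum>j\<in>J. c j * g j x)\<^sup>2)"
    and "(\<integral>x. (\<Sum>j\<in>J. c j * g j x)\<^sup>2 \<partial>M) = (\<Sum>j\<in>J. \<Sum>k\<in>J. c j * c k * (\<integral>x. g j x * g k x \<partial>M))"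
proof -
  have int: "integrable M (\<lambda>x. g j x * g k x)" if "j \<in> J" "k \<in> J" for j k
    using integrable_mult_of_square_integrable assms that by blast
  have eq: "(\<lambda>x. (\<Sum>j\<in>J. c j * g j x)\<^sup>2) = (\<lambda>x. \<Sum>j\<in>J. \<Sum>k\<in>J. c j * c k * (g j x * g k x))"
    by (simp add: power2_eq_square sum_product ac_simps)
  show "integrable M (\<lambda>x. (\<Sum>j\<in>J. c j * g j x)\<^sup>2)"
    unfolding eq using int by simp
  show "(\<integral>x. (\<Sum>j\<in>J. c j * g j x)\<^sup>2 \<partial>M) = (\<Sum>j\<in>J. \<Sum>k\<in>J. c j * c k * (\<integral>x. g j x * g k x \<partial>M))"
    unfolding eq using int by (simp add: Bochner_Integration.integral_sum)
qed

lemma integral_double_sum: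
  fixes f :: "'i \<Rightarrow> 'k \<Rightarrow> 'a \<Rightarrow> real"
  assumes "\<And>a b. a \<in> A \<Longrightarrow> b \<in> B \<Longrightarrow> integrable M (f a b)"
  shows "integrable M (\<lambda>x. \<Sum>a\<in>A. \<Sum>b\<in>B. f a b x)"
    and "(\<integral>x. (\<Sum>a\<in>A. \<Sum>b\<in>B. f a b x) \<partial>M) = (\<Sum>a\<in>A. \<Sum>b\<in>B. integral\<^sup>L M (f a b))"
  using assms by (simp_all add: Bochner_Integration.integral_sum Bochner_Integration.integrable_sum)

lemma (in prob_space) variance_le_second_moment:
  fixes Y :: "'a \<Rightarrow> real"
  assumes "random_variable borel Y" "integrable M (\<lambda>x. (Y x)\<^sup>2)"
  shows "integrable M (\<lambda>x. (Y x - expectation Y)\<^sup>2)"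
    and "variance Y \<le> expectation (\<lambda>x. (Y x)\<^sup>2)"
proof -
  have Y: "integrable M Y" using square_integrable_imp_integrable assms by blast
  show "integrable M (\<lambda>x. (Y x - expectation Y)\<^sup>2)"
    using assms Y by (simp add: power2_diff)
  show "variance Y \<le> expectation (\<lambda>x. (Y x)\<^sup>2)"
    using variance_eq[OF Y assms(2)] by simp
qed

lemma (in prob_space) covariance_eq:
  fixes g h :: "'a \<Rightarrow> real"
  assumes "random_variable borel g" "random_variable borel h"
    and "integrable M (\<lambda>x. (g x)\<^sup>2)" "integrable M (\<lambda>x. (h x)\<^sup>2)"
  shows "expectation (\<lambda>x. (g x - expectation g) * (h x - expectation h))
       = expectation (\<lambda>x. g x * h x) - expectation g * expectation h"
proof -
  have "integrable M g" "integrable M h"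
    using square_integrable_imp_integrable assms by auto
  moreover have "integrable M (\<lambda>x. g x * h x)"
    by (rule integrable_mult_of_square_integrable[OF assms])
  ultimately show ?thesis
    by (simp add: algebra_simps prob_space)
qed

lemma (in prob_space) prob_abs_mult_gt_le:
  fixes X Y :: "'a \<Rightarrow> real"
  assumes [measurable]: "random_variable borel X" "random_variable borel Y"
    and "integrable M (\<lambda>x. (X x)\<^sup>2)" "integrable M (\<lambda>x. (Y x)\<^sup>2)" and "0 < \<epsilon>"
  shows "prob {x \<in> space M. \<epsilon> < \<bar>X x * Y x\<bar>}
    \<le> sqrt (expectation (\<lambda>x. (X x)\<^sup>2)) * sqrt (expectation (\<lambda>x. (Y x)\<^sup>2)) / \<epsilon>"
proof -
  have "prob {x \<in> space M. \<epsilon> < \<bar>X x * Y x\<bar>} \<le> prob {x \<in> space M. \<epsilon> \<le> \<bar>X x * Y x\<bar>}"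
    by (intro finite_measure_mono) auto
  also have "\<dots> \<le> expectation (\<lambda>x. \<bar>X x * Y x\<bar>) / \<epsilon>"
    using integrable_mult_of_square_integrable[OF assms(1-4)] \<open>0 < \<epsilon>\<close>
    by (intro integral_Markov_inequality_measure[where A = "space M"]) auto
  also have "\<dots> \<le> sqrt (expectation (\<lambda>x. (X x)\<^sup>2)) * sqrt (expectation (\<lambda>x. (Y x)\<^sup>2)) / \<epsilon>"
    using integral_abs_mult_le_sqrt[OF assms(1-4)] \<open>0 < \<epsilon>\<close> by (simp add: divide_right_mono)
  finally show ?thesis .
qed

definition frobenius_norm :: "'i set \<Rightarrow> ('i \<Rightarrow> 'i \<Rightarrow> real) \<Rightarrow> real" where
  "frobenius_norm P a = sqrt (\<Sum>j\<in>P. \<Sum>k\<in>P. (a j k)\<^sup>2)"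

lemma double_sum_mult_le_frobenius:
  "(\<Sum>j\<in>P. \<Sum>k\<in>P. x j k * y j k) \<le> frobenius_norm P x * frobenius_norm P y"
proof -
  have pairs: "(\<Sum>j\<in>P. \<Sum>k\<in>P. h j k) = (\<Sum>q\<in>P \<times> P. h (fst q) (snd q))" for h :: "_ \<Rightarrow> _ \<Rightarrow> real"
    by (simp add: sum.cartesian_product case_prod_beta)
  have "(\<Sum>j\<in>P. \<Sum>k\<in>P. x j k * y j k)\<^sup>2 \<le> (\<Sum>j\<in>P. \<Sum>k\<in>P. (x j k)\<^sup>2) * (\<Sum>j\<in>P. \<Sum>k\<in>P. (y j k)\<^sup>2)"
    unfolding pairs by (rule Cauchy_Schwarz_ineq_sum)
  then have "sqrt ((\<Sum>j\<in>P. \<Sum>k\<in>P. x j k * y j k)\<^sup>2) \<le> frobenius_norm P x * frobenius_norm P y"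
    unfolding frobenius_norm_def real_sqrt_mult[symmetric] by (rule real_sqrt_le_mono)
  then show ?thesis by simp
qed

lemma quadratic_form_le_frobenius:
  "(\<Sum>j\<in>P. \<Sum>k\<in>P. t j * t k * a j k) \<le> (\<Sum>j\<in>P. (t j)\<^sup>2) * frobenius_norm P a"
proof -
  have "frobenius_norm P (\<lambda>j k. t j * t k) = sqrt ((\<Sum>j\<in>P. (t j)\<^sup>2)\<^sup>2)"
    unfolding frobenius_norm_def by (simp add: power2_eq_square sum_product ac_simps)
  then have "frobenius_norm P (\<lambda>j k. t j * t k) = (\<Sum>j\<in>P. (t j)\<^sup>2)"
    by (simp add: sum_nonneg)
  then show ?thesis
    using double_sum_mult_le_frobenius[where x = "\<lambda>j k. t j * t k" and y = a and P = P] by simp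
qed

lemma sum_offdiagonal_const:
  assumes "i < n"
  shows "(\<Sum>k<n. if i \<noteq> k then c else 0) = (real n - 1) * (c :: real)"
    and "(\<Sum>k<n. if k \<noteq> i then c else 0) = (real n - 1) * c"
proof -
  have "(\<Sum>k<n. if i \<noteq> k then c else 0) = (\<Sum>k<n. c - (if i = k then c else 0))"
    by (intro sum.cong) auto
  also have "\<dots> = (real n - 1) * c" using assms by (simp add: sum_subtractf algebra_simps)
  finally show "(\<Sum>k<n. if i \<noteq> k then c else 0) = (real n - 1) * c" .
  then show "(\<Sum>k<n. if k \<noteq> i then c else 0) = (real n - 1) * c"
    by (simp add: eq_commute)
qed

lemma sum_sum_delta:
  assumes "finite A" "finite B" "a \<in> A" "b \<in> B"
  shows "(\<Sum>i\<in>A. \<Sum>k\<in>B. if i = a \<and> k = b then c else 0) = (c :: real)"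
proof -
  have "(\<Sum>i\<in>A. \<Sum>k\<in>B. if i = a \<and> k = b then c else 0) = (\<Sum>i\<in>A. if i = a then c else 0)"
    using assms by (intro sum.cong refl) (simp add: sum.delta')
  then show ?thesis using assms by (simp add: sum.delta')
qed

lemma real_choose_two: "real (n choose 2) = real n * (real n - 1) / 2"
proof (induction n)
  case (Suc n)
  have "Suc n choose 2 = n + (n choose 2)"
    by (simp add: numeral_2_eq_2)
  then show ?case using Suc by (simp add: field_simps)
qed simp

lemma Bseq_mult_tendsto_zero:
  fixes f g :: "nat \<Rightarrow> real"
  assumes "Bseq f" "g \<longlonglongrightarrow> 0"
  shows "(\<lambda>n. f n * g n) \<longlonglongrightarrow> 0"
  using bounded_bilinear.Bfun_prod_Zfun[OF bounded_bilinear_mult] assms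
  by (simp add: tendsto_Zfun_iff)

lemma tendsto_zero_of_real_mult_sqrt:
  fixes f :: "nat \<Rightarrow> real"
  assumes "\<And>n. 0 \<le> f n" and "(\<lambda>n. real n * sqrt (f n)) \<longlonglongrightarrow> 0"
  shows "f \<longlonglongrightarrow> 0"
proof -
  have "(\<lambda>n. sqrt (f n)) \<longlonglongrightarrow> 0"
  proof (rule Lim_null_comparison[OF _ assms(2)])
    show "\<forall>\<^sub>F n in sequentially. norm (sqrt (f n)) \<le> real n * sqrt (f n)"
      using eventually_ge_at_top[of "1::nat"]
    proof eventually_elim
      case (elim n)
      then show ?case using mult_right_mono[of 1 "real n" "sqrt (f n)"] assms(1)[of n] by simp
    qed
  qed
  then have "(\<lambda>n. (sqrt (f n))\<^sup>2) \<longlonglongrightarrow> 0"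
    using tendsto_power[of _ 0 _ 2] by simp
  then show ?thesis using assms(1) by simp
qed

section \<open>Degenerate U-statistics of an i.i.d. sample\<close>

lemma measurable_PiM_component_comp:
  assumes "g \<in> borel_measurable N" "i \<in> A"
  shows "(\<lambda>x. g (x i)) \<in> borel_measurable (PiM A (\<lambda>_. N))"
  using measurable_compose[OF measurable_component_singleton[OF assms(2)] assms(1)]
  by (simp add: comp_def)

locale iid_sample = prob_space M for M :: "'a measure" +
  fixes N :: "'b measure" and D :: "'b measure" and X :: "nat \<Rightarrow> 'a \<Rightarrow> 'b" and n :: nat
  assumes prob_space_D: "prob_space D"
    and sets_D: "sets D = sets N"
    and measurable_X: "\<And>i. i < n \<Longrightarrow> X i \<in> measurable M N"
    and indep_X: "indep_vars (\<lambda>_. N) X {..<n}"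
    and distr_X: "\<And>i. i < n \<Longrightarrow> distr M N (X i) = D"
begin

lemma borel_measurable_D:
  fixes g :: "'b \<Rightarrow> real"
  shows "g \<in> borel_measurable N \<Longrightarrow> g \<in> borel_measurable D"
  by (metis measurable_cong_sets[OF sets_D refl])

lemma integrable_D_of_square:
  fixes g :: "'b \<Rightarrow> real"
  assumes "g \<in> borel_measurable N" "integrable D (\<lambda>z. (g z)\<^sup>2)"
  shows "integrable D g"
proof -
  interpret D: prob_space D by (rule prob_space_D)
  show ?thesis using D.square_integrable_imp_integrable[OF borel_measurable_D] assms by blast
qed

lemma integrable_D_mult:
  fixes g h :: "'b \<Rightarrow> real"
  assumes "g \<in> borel_measurable N" "h \<in> borel_measurable N"
    and "integrable D (\<lambda>z. (g z)\<^sup>2)" "integrable D (\<lambda>z. (h z)\<^sup>2)"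
  shows "integrable D (\<lambda>z. g z * h z)"
  using integrable_mult_of_square_integrable[OF borel_measurable_D borel_measurable_D] assms
  by blast

lemma measurable_sample:
  fixes g :: "'b \<Rightarrow> real"
  assumes "g \<in> borel_measurable N" "i < n"
  shows "(\<lambda>\<omega>. g (X i \<omega>)) \<in> borel_measurable M"
  using measurable_compose[OF measurable_X assms(1)] assms(2) by (simp add: comp_def)

lemma integrable_sample_iff:
  fixes g :: "'b \<Rightarrow> real"
  assumes "g \<in> borel_measurable N" "i < n"
  shows "integrable M (\<lambda>\<omega>. g (X i \<omega>)) \<longleftrightarrow> integrable D g"
  using integrable_distr_eq[OF measurable_X assms(1)] distr_X assms(2) by simp

lemma integral_sample:
  fixes g :: "'b \<Rightarrow> real"
  assumes "g \<in> borel_measurable N" "i < n"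
  shows "(\<integral>\<omega>. g (X i \<omega>) \<partial>M) = integral\<^sup>L D g"
  using integral_distr[OF measurable_X assms(1)] distr_X assms(2) by simp

lemma integral_mult_disjoint_blocks:
  fixes G H :: "(nat \<Rightarrow> 'b) \<Rightarrow> real"
  assumes "A \<inter> B = {}" "A \<subseteq> {..<n}" "B \<subseteq> {..<n}"
    and "G \<in> borel_measurable (PiM A (\<lambda>_. N))" "H \<in> borel_measurable (PiM B (\<lambda>_. N))"
    and "integrable M (\<lambda>\<omega>. G (restrict (\<lambda>i. X i \<omega>) A))"
    and "integrable M (\<lambda>\<omega>. H (restrict (\<lambda>i. X i \<omega>) B))"
  shows "integrable M (\<lambda>\<omega>. G (restrict (\<lambda>i. X i \<omega>) A) * H (restrict (\<lambda>i. X i \<omega>) B))"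
    and "(\<integral>\<omega>. G (restrict (\<lambda>i. X i \<omega>) A) * H (restrict (\<lambda>i. X i \<omega>) B) \<partial>M)
         = (\<integral>\<omega>. G (restrict (\<lambda>i. X i \<omega>) A) \<partial>M) * (\<integral>\<omega>. H (restrict (\<lambda>i. X i \<omega>) B) \<partial>M)"
proof -
  have "indep_var borel (\<lambda>\<omega>. G (restrict (\<lambda>i. X i \<omega>) A)) borel (\<lambda>\<omega>. H (restrict (\<lambda>i. X i \<omega>) B))"
    using indep_var_compose[OF indep_var_restrict[OF indep_X assms(1-3)] assms(4,5)]
    by (simp add: comp_def)
  then show "integrable M (\<lambda>\<omega>. G (restrict (\<lambda>i. X i \<omega>) A) * H (restrict (\<lambda>i. X i \<omega>) B))"
    and "(\<integral>\<omega>. G (restrict (\<lambda>i. X i \<omega>) A) * H (restrict (\<lambda>i. X i \<omega>) B) \<partial>M)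
         = (\<integral>\<omega>. G (restrict (\<lambda>i. X i \<omega>) A) \<partial>M) * (\<integral>\<omega>. H (restrict (\<lambda>i. X i \<omega>) B) \<partial>M)"
    using indep_var_integrable indep_var_lebesgue_integral assms(6,7) by blast+
qed

lemma integral_mult_distinct_samples:
  fixes g h :: "'b \<Rightarrow> real"
  assumes "i < n" "k < n" "i \<noteq> k"
    and "g \<in> borel_measurable N" "h \<in> borel_measurable N" "integrable D g" "integrable D h"
  shows "integrable M (\<lambda>\<omega>. g (X i \<omega>) * h (X k \<omega>))"
    and "(\<integral>\<omega>. g (X i \<omega>) * h (X k \<omega>) \<partial>M) = integral\<^sup>L D g * integral\<^sup>L D h"
proof -
  have blocks: "{i} \<inter> {k} = {}" "{i} \<subseteq> {..<n}" "{k} \<subseteq> {..<n}"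
    "(\<lambda>x. g (x i)) \<in> borel_measurable (PiM {i} (\<lambda>_. N))"
    "(\<lambda>x. h (x k)) \<in> borel_measurable (PiM {k} (\<lambda>_. N))"
    using assms by (auto intro!: measurable_PiM_component_comp)
  have "integrable M (\<lambda>\<omega>. g (X i \<omega>))" "integrable M (\<lambda>\<omega>. h (X k \<omega>))"
    using integrable_sample_iff assms by auto
  then show "integrable M (\<lambda>\<omega>. g (X i \<omega>) * h (X k \<omega>))"
    and "(\<integral>\<omega>. g (X i \<omega>) * h (X k \<omega>) \<partial>M) = integral\<^sup>L D g * integral\<^sup>L D h"
    using integral_mult_disjoint_blocks[OF blocks] integral_sample assms by simp_all
qed

lemma integral_square_sum_centered:
  fixes g :: "'b \<Rightarrow> real"
  assumes g: "g \<in> borel_measurable N" and g2: "integrable D (\<lambda>z. (g z)\<^sup>2)"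
    and g0: "integral\<^sup>L D g = 0"
  shows "integrable M (\<lambda>\<omega>. (\<Sum>i<n. g (X i \<omega>))\<^sup>2)"
    and "(\<integral>\<omega>. (\<Sum>i<n. g (X i \<omega>))\<^sup>2 \<partial>M) = real n * (\<integral>z. (g z)\<^sup>2 \<partial>D)"
proof -
  have "integrable D g" by (rule integrable_D_of_square[OF g g2])
  have g2_meas: "(\<lambda>z. (g z)\<^sup>2) \<in> borel_measurable N" using g by measurable
  have cross: "integrable M (\<lambda>\<omega>. g (X i \<omega>) * g (X k \<omega>)) \<and>
     (\<integral>\<omega>. g (X i \<omega>) * g (X k \<omega>) \<partial>M) = (if i = k then (\<integral>z. (g z)\<^sup>2 \<partial>D) else 0)"
    if "i < n" "k < n" for i k
  proof (cases "i = k")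
    case True
    then show ?thesis
      using integrable_sample_iff[OF g2_meas] integral_sample[OF g2_meas] g2 that
      by (simp add: power2_eq_square)
  next
    case False
    then show ?thesis
      using integral_mult_distinct_samples[OF that False g g \<open>integrable D g\<close> \<open>integrable D g\<close>] g0
      by simp
  qed
  have square: "(\<lambda>\<omega>. (\<Sum>i<n. g (X i \<omega>))\<^sup>2) = (\<lambda>\<omega>. \<Sum>i<n. \<Sum>k<n. g (X i \<omega>) * g (X k \<omega>))"
    by (simp add: power2_eq_square sum_product)
  show "integrable M (\<lambda>\<omega>. (\<Sum>i<n. g (X i \<omega>))\<^sup>2)"
    unfolding square using cross by (intro integral_double_sum(1)) auto
  have "(\<integral>\<omega>. (\<Sum>i<n. g (X i \<omega>))\<^sup>2 \<partial>M) = (\<Sum>i<n. \<Sum>k<n. \<integral>\<omega>. g (X i \<omega>) * g (X k \<omega>) \<partial>M)"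
    unfolding square using cross by (intro integral_double_sum(2)) auto
  also have "\<dots> = (\<Sum>i<n. \<Sum>k<n. if i = k then (\<integral>z. (g z)\<^sup>2 \<partial>D) else 0)"
    using cross by (intro sum.cong refl) auto
  finally show "(\<integral>\<omega>. (\<Sum>i<n. g (X i \<omega>))\<^sup>2 \<partial>M) = real n * (\<integral>z. (g z)\<^sup>2 \<partial>D)"
    by simp
qed

end

locale degenerate_kernel = iid_sample +
  fixes J :: "'j set" and u v :: "'j \<Rightarrow> 'b \<Rightarrow> real"
  assumes measurable_u: "\<And>j. u j \<in> borel_measurable N"
    and measurable_v: "\<And>j. v j \<in> borel_measurable N"
    and square_integrable_u: "\<And>j. j \<in> J \<Longrightarrow> integrable D (\<lambda>z. (u j z)\<^sup>2)"
    and square_integrable_v: "\<And>j. j \<in> J \<Longrightarrow> integrable D (\<lambda>z. (v j z)\<^sup>2)"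
    and mean_u: "\<And>j. j \<in> J \<Longrightarrow> integral\<^sup>L D (u j) = 0"
    and mean_v: "\<And>j. j \<in> J \<Longrightarrow> integral\<^sup>L D (v j) = 0"
begin

definition kernel :: "'b \<Rightarrow> 'b \<Rightarrow> real" where
  "kernel x y = (\<Sum>j\<in>J. u j x * v j y)"

definition kernel_moment :: real where
  "kernel_moment = (\<Sum>j\<in>J. \<Sum>j'\<in>J. (\<integral>z. u j z * u j' z \<partial>D) * (\<integral>z. v j z * v j' z \<partial>D))"

definition offdiagonal_sum :: "'a \<Rightarrow> real" where
  "offdiagonal_sum \<omega> = (\<Sum>i<n. \<Sum>k<n. if i \<noteq> k then kernel (X i \<omega>) (X k \<omega>) else 0)"

lemma measurable_kernel_PiM:
  assumes "i \<in> B" "k \<in> B"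
  shows "(\<lambda>x. kernel (x i) (x k)) \<in> borel_measurable (PiM B (\<lambda>_. N))"
  unfolding kernel_def
  by (intro borel_measurable_sum borel_measurable_times measurable_PiM_component_comp
      measurable_u measurable_v assms)

lemma measurable_kernel_sample:
  assumes "i < n" "k < n"
  shows "(\<lambda>\<omega>. kernel (X i \<omega>) (X k \<omega>)) \<in> borel_measurable M"
  unfolding kernel_def
  by (intro borel_measurable_sum borel_measurable_times measurable_sample
      measurable_u measurable_v assms)

lemma integral_kernel_square:
  assumes ik: "i < n" "k < n" "i \<noteq> k"
  shows "integrable M (\<lambda>\<omega>. (kernel (X i \<omega>) (X k \<omega>))\<^sup>2)"
    and "(\<integral>\<omega>. (kernel (X i \<omega>) (X k \<omega>))\<^sup>2 \<partial>M) = kernel_moment"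
proof -
  have square: "(kernel x y)\<^sup>2 = (\<Sum>j\<in>J. \<Sum>j'\<in>J. (u j x * u j' x) * (v j y * v j' y))" for x y
    unfolding kernel_def power2_eq_square sum_product by (intro sum.cong refl) (simp add: ac_simps)
  have cross: "integrable M (\<lambda>\<omega>. (u j (X i \<omega>) * u j' (X i \<omega>)) * (v j (X k \<omega>) * v j' (X k \<omega>))) \<and>
     (\<integral>\<omega>. (u j (X i \<omega>) * u j' (X i \<omega>)) * (v j (X k \<omega>) * v j' (X k \<omega>)) \<partial>M)
       = (\<integral>z. u j z * u j' z \<partial>D) * (\<integral>z. v j z * v j' z \<partial>D)"
    if "j \<in> J" "j' \<in> J" for j j'
    using integral_mult_distinct_samples[OF ik, of "\<lambda>z. u j z * u j' z" "\<lambda>z. v j z * v j' z"]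
      integrable_D_mult[OF measurable_u measurable_u]
      integrable_D_mult[OF measurable_v measurable_v]
      square_integrable_u square_integrable_v measurable_u measurable_v that
    by auto
  show "integrable M (\<lambda>\<omega>. (kernel (X i \<omega>) (X k \<omega>))\<^sup>2)"
    unfolding square using cross by (intro integral_double_sum(1)) auto
  show "(\<integral>\<omega>. (kernel (X i \<omega>) (X k \<omega>))\<^sup>2 \<partial>M) = kernel_moment"
    unfolding square kernel_moment_def using cross
    by (subst integral_double_sum(2)) (auto intro!: sum.cong)
qed

lemma kernel_moment_nonneg:
  assumes "2 \<le> n"
  shows "0 \<le> kernel_moment"
proof -
  have "(\<integral>\<omega>. (kernel (X 0 \<omega>) (X 1 \<omega>))\<^sup>2 \<partial>M) = kernel_moment"
    using assms by (intro integral_kernel_square(2)) auto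
  moreover have "0 \<le> (\<integral>\<omega>. (kernel (X 0 \<omega>) (X 1 \<omega>))\<^sup>2 \<partial>M)"
    by (intro integral_nonneg_AE) simp
  ultimately show ?thesis by linarith
qed

lemma integrable_kernel_mult:
  assumes "i < n" "k < n" "i \<noteq> k" "i' < n" "k' < n" "i' \<noteq> k'"
  shows "integrable M (\<lambda>\<omega>. kernel (X i \<omega>) (X k \<omega>) * kernel (X i' \<omega>) (X k' \<omega>))"
  using assms by (intro integrable_mult_of_square_integrable measurable_kernel_sample
      integral_kernel_square(1))

text \<open>The degeneracy of the kernel: an index occurring only once in a product of two kernel
  terms carries a centred factor that is independent of everything else.\<close>

lemma integral_kernel_mult_fresh_index:
  fixes a c :: "'j \<Rightarrow> 'b \<Rightarrow> real"
  assumes measurable_a: "\<And>j. a j \<in> borel_measurable N"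
    and measurable_c: "\<And>j. c j \<in> borel_measurable N"
    and square_integrable_a: "\<And>j. j \<in> J \<Longrightarrow> integrable D (\<lambda>z. (a j z)\<^sup>2)"
    and square_integrable_c: "\<And>j. j \<in> J \<Longrightarrow> integrable D (\<lambda>z. (c j z)\<^sup>2)"
    and mean_a: "\<And>j. j \<in> J \<Longrightarrow> integral\<^sup>L D (a j) = 0"
    and idx: "m < n" "l < n" "i' < n" "k' < n" "i' \<noteq> k'" "m \<noteq> l" "m \<noteq> i'" "m \<noteq> k'"
  shows "(\<integral>\<omega>. (\<Sum>j\<in>J. a j (X m \<omega>) * c j (X l \<omega>)) * kernel (X i' \<omega>) (X k' \<omega>) \<partial>M) = 0"
proof -
  have summand: "integrable M (\<lambda>\<omega>. a j (X m \<omega>) * (c j (X l \<omega>) * kernel (X i' \<omega>) (X k' \<omega>))) \<and>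
     (\<integral>\<omega>. a j (X m \<omega>) * (c j (X l \<omega>) * kernel (X i' \<omega>) (X k' \<omega>)) \<partial>M) = 0"
    if j: "j \<in> J" for j
  proof -
    have "integrable M (\<lambda>\<omega>. (c j (X l \<omega>))\<^sup>2)"
      using integrable_sample_iff[of "\<lambda>z. (c j z)\<^sup>2" l] square_integrable_c[OF j] measurable_c idx
      by auto
    then have rest: "integrable M (\<lambda>\<omega>. c j (X l \<omega>) * kernel (X i' \<omega>) (X k' \<omega>))"
      using idx by (intro integrable_mult_of_square_integrable measurable_sample measurable_c
          measurable_kernel_sample integral_kernel_square(1))
    have "integrable M (\<lambda>\<omega>. a j (X m \<omega>))" "(\<integral>\<omega>. a j (X m \<omega>) \<partial>M) = 0"
      using integrable_sample_iff[OF measurable_a idx(1)] integral_sample[OF measurable_a idx(1)]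
        integrable_D_of_square[OF measurable_a square_integrable_a[OF j]] mean_a[OF j]
      by simp_all
    moreover have blocks: "{m} \<inter> {l, i', k'} = {}" "{m} \<subseteq> {..<n}" "{l, i', k'} \<subseteq> {..<n}"
      "(\<lambda>x. a j (x m)) \<in> borel_measurable (PiM {m} (\<lambda>_. N))"
      "(\<lambda>x. c j (x l) * kernel (x i') (x k')) \<in> borel_measurable (PiM {l, i', k'} (\<lambda>_. N))"
      using idx by (auto intro!: measurable_PiM_component_comp measurable_a measurable_c
          borel_measurable_times measurable_kernel_PiM)
    ultimately show ?thesis
      using integral_mult_disjoint_blocks[OF blocks] rest by simp
  qed
  have "(\<lambda>\<omega>. (\<Sum>j\<in>J. a j (X m \<omega>) * c j (X l \<omega>)) * kernel (X i' \<omega>) (X k' \<omega>)) =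
      (\<lambda>\<omega>. \<Sum>j\<in>J. a j (X m \<omega>) * (c j (X l \<omega>) * kernel (X i' \<omega>) (X k' \<omega>)))"
    by (simp add: sum_distrib_right mult.assoc)
  then show ?thesis
    using summand by (simp add: Bochner_Integration.integral_sum)
qed

lemma integral_kernel_mult_eq_0:
  assumes idx: "i < n" "k < n" "i' < n" "k' < n" "i \<noteq> k" "i' \<noteq> k'"
    and fresh: "i \<notin> {i', k'} \<or> k \<notin> {i', k'}"
  shows "(\<integral>\<omega>. kernel (X i \<omega>) (X k \<omega>) * kernel (X i' \<omega>) (X k' \<omega>) \<partial>M) = 0"
proof (cases "i \<in> {i', k'}")
  case False
  then show ?thesis
    using integral_kernel_mult_fresh_index[of u v i k i' k', OF measurable_u measurable_v
        square_integrable_u square_integrable_v mean_u] idx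
    unfolding kernel_def[of "X i _" "X k _"] by simp
next
  case True
  have "kernel (X i \<omega>) (X k \<omega>) = (\<Sum>j\<in>J. v j (X k \<omega>) * u j (X i \<omega>))" for \<omega>
    unfolding kernel_def by (simp add: mult.commute)
  then show ?thesis
    using integral_kernel_mult_fresh_index[of v u k i i' k', OF measurable_v measurable_u
        square_integrable_v square_integrable_u mean_v] idx True fresh
    by simp
qed

lemma integral_kernel_mult_le:
  assumes "i < n" "k < n" "i' < n" "k' < n" "i \<noteq> k" "i' \<noteq> k'"
  shows "(\<integral>\<omega>. kernel (X i \<omega>) (X k \<omega>) * kernel (X i' \<omega>) (X k' \<omega>) \<partial>M) \<le> kernel_moment"
proof -
  let ?G = "\<lambda>\<omega>. kernel (X i \<omega>) (X k \<omega>)" and ?G' = "\<lambda>\<omega>. kernel (X i' \<omega>) (X k' \<omega>)"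
  have "?G \<omega> * ?G' \<omega> \<le> ((?G \<omega>)\<^sup>2 + (?G' \<omega>)\<^sup>2) / 2" for \<omega>
    using sum_squares_bound[of "?G \<omega>" "?G' \<omega>"] by simp
  then have "(\<integral>\<omega>. ?G \<omega> * ?G' \<omega> \<partial>M) \<le> (\<integral>\<omega>. ((?G \<omega>)\<^sup>2 + (?G' \<omega>)\<^sup>2) / 2 \<partial>M)"
    using assms
    by (intro integral_mono integrable_kernel_mult) (auto intro!: integral_kernel_square(1))
  also have "\<dots> = kernel_moment"
    using assms integral_kernel_square[of i k] integral_kernel_square[of i' k'] by simp
  finally show ?thesis .
qed

lemma measurable_offdiagonal_sum: "offdiagonal_sum \<in> borel_measurable M"
proof -
  have "(\<lambda>\<omega>. if i \<noteq> k then kernel (X i \<omega>) (X k \<omega>) else 0) \<in> borel_measurable M"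
    if "i < n" "k < n" for i k
    using measurable_kernel_sample[OF that] by (cases "i = k") simp_all
  then have "(\<lambda>\<omega>. offdiagonal_sum \<omega>) \<in> borel_measurable M"
    unfolding offdiagonal_sum_def by (intro borel_measurable_sum) auto
  then show ?thesis by simp
qed

lemma integral_offdiagonal_sum_square_le:
  assumes "2 \<le> n"
  shows "integrable M (\<lambda>\<omega>. (offdiagonal_sum \<omega>)\<^sup>2)"
    and "(\<integral>\<omega>. (offdiagonal_sum \<omega>)\<^sup>2 \<partial>M) \<le> 2 * (real n)\<^sup>2 * kernel_moment"
proof -
  define T where "T i k \<omega> = (if i \<noteq> k then kernel (X i \<omega>) (X k \<omega>) else 0)" for i k \<omega>
  define \<delta> where "\<delta> i k i' k' = (if i = i' \<and> k = k' then kernel_moment else 0)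
    + (if i = k' \<and> k = i' then kernel_moment else 0)" for i k i' k' :: nat
  have square: "(\<lambda>\<omega>. (offdiagonal_sum \<omega>)\<^sup>2) = (\<lambda>\<omega>. \<Sum>i'<n. \<Sum>k'<n. \<Sum>i<n. \<Sum>k<n. T i k \<omega> * T i' k' \<omega>)"
    unfolding offdiagonal_sum_def T_def[symmetric] power2_eq_square
    by (simp add: sum_distrib_left sum_distrib_right)
  have int: "integrable M (\<lambda>\<omega>. T i k \<omega> * T i' k' \<omega>)"
    if "i \<in> {..<n}" "k \<in> {..<n}" "i' \<in> {..<n}" "k' \<in> {..<n}" for i k i' k'
    using integrable_kernel_mult[of i k i' k'] that unfolding T_def
    by (cases "i = k"; cases "i' = k'") auto
  have int_inner: "integrable M (\<lambda>\<omega>. \<Sum>i<n. \<Sum>k<n. T i k \<omega> * T i' k' \<omega>)"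
    if "i' \<in> {..<n}" "k' \<in> {..<n}" for i' k'
    using int that by (intro integral_double_sum(1))
  show "integrable M (\<lambda>\<omega>. (offdiagonal_sum \<omega>)\<^sup>2)"
    unfolding square using int_inner by (rule integral_double_sum(1))
  have \<delta>_nonneg: "0 \<le> \<delta> i k i' k'" for i k i' k'
    unfolding \<delta>_def using kernel_moment_nonneg[OF assms] by (intro add_nonneg_nonneg) simp_all
  have bound: "(\<integral>\<omega>. T i k \<omega> * T i' k' \<omega> \<partial>M) \<le> \<delta> i k i' k'"
    if idx: "i < n" "k < n" "i' < n" "k' < n" for i k i' k'
  proof (cases "i \<noteq> k \<and> i' \<noteq> k'")
    case True
    then have T: "(\<lambda>\<omega>. T i k \<omega> * T i' k' \<omega>)
        = (\<lambda>\<omega>. kernel (X i \<omega>) (X k \<omega>) * kernel (X i' \<omega>) (X k' \<omega>))"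
      by (simp add: T_def)
    show ?thesis
    proof (cases "i \<in> {i', k'} \<and> k \<in> {i', k'}")
      case same: True
      with True have "(i = i' \<and> k = k') \<or> (i = k' \<and> k = i')" by auto
      then have "kernel_moment \<le> \<delta> i k i' k'"
        using kernel_moment_nonneg[OF assms] unfolding \<delta>_def by (elim disjE conjE) simp_all
      then show ?thesis unfolding T using integral_kernel_mult_le[OF idx] True by simp
    next
      case False
      then show ?thesis unfolding T using integral_kernel_mult_eq_0[OF idx] True \<delta>_nonneg by simp
    qed
  next
    case False
    then have "(\<lambda>\<omega>. T i k \<omega> * T i' k' \<omega>) = (\<lambda>\<omega>. 0)" by (auto simp: T_def)
    then show ?thesis using \<delta>_nonneg by simp
  qed
  have "(\<integral>\<omega>. (offdiagonal_sum \<omega>)\<^sup>2 \<partial>M) = (\<Sum>i'<n. \<Sum>k'<n. \<integral>\<omega>. (\<Sum>i<n. \<Sum>k<n. T i k \<omega> * T i' k' \<omega>) \<partial>M)"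
    unfolding square using int_inner by (rule integral_double_sum(2))
  also have "\<dots> = (\<Sum>i'<n. \<Sum>k'<n. \<Sum>i<n. \<Sum>k<n. \<integral>\<omega>. T i k \<omega> * T i' k' \<omega> \<partial>M)"
    using int by (intro sum.cong refl integral_double_sum(2))
  also have "\<dots> \<le> (\<Sum>i'<n. \<Sum>k'<n. \<Sum>i<n. \<Sum>k<n. \<delta> i k i' k')"
    using bound by (intro sum_mono) auto
  also have "\<dots> = (\<Sum>i'<n. \<Sum>k'<n. 2 * kernel_moment)"
  proof (intro sum.cong refl)
    fix i' k' assume "i' \<in> {..<n}" "k' \<in> {..<n}"
    then show "(\<Sum>i<n. \<Sum>k<n. \<delta> i k i' k') = 2 * kernel_moment"
      using sum_sum_delta[of "{..<n}" "{..<n}" i' k' kernel_moment]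
        sum_sum_delta[of "{..<n}" "{..<n}" k' i' kernel_moment]
      unfolding \<delta>_def by (simp only: sum.distrib) simp
  qed
  also have "\<dots> = 2 * (real n)\<^sup>2 * kernel_moment" by (simp add: power2_eq_square)
  finally show "(\<integral>\<omega>. (offdiagonal_sum \<omega>)\<^sup>2 \<partial>M) \<le> 2 * (real n)\<^sup>2 * kernel_moment" .
qed

end

section \<open>Population quantities\<close>

lemma measurable_obs_coordinate [measurable]: "(\<lambda>z. fst z j) \<in> borel_measurable obsM"
  unfolding obsM_def by measurable

lemma measurable_obs_response [measurable]: "(\<lambda>z. snd z) \<in> borel_measurable obsM"
  unfolding obsM_def by measurable

lemma measurable_obs_hS [measurable]: "(\<lambda>z. hS S (fst z)) \<in> borel_measurable obsM"
  unfolding hS_def by (intro borel_measurable_sum) (auto simp: case_prod_beta)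

locale population = prob_space D for D :: "((nat \<Rightarrow> real) \<times> real) measure" +
  fixes p :: nat and \<Theta> :: "nat set"
  assumes sets_D: "sets D = sets obsM"
    and second_moment_X: "\<And>j k. j \<in> {1..p} \<Longrightarrow> k \<in> {1..p} \<Longrightarrow>
      integrable D (\<lambda>z. fst z j * fst z k) \<and> (\<integral>z. fst z j * fst z k \<partial>D) = (if j = k then 1 else 0)"
    and square_integrable_XX: "\<And>j k. j \<in> {1..p} \<Longrightarrow> k \<in> {1..p} \<Longrightarrow>
      integrable D (\<lambda>z. (fst z j * fst z k)\<^sup>2)"
    and square_integrable_XY: "\<And>j. j \<in> {1..p} \<Longrightarrow> integrable D (\<lambda>z. (fst z j * snd z)\<^sup>2)"
    and square_integrable_XYf: "\<And>j. j \<in> {1..p} \<Longrightarrow>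
      integrable D (\<lambda>z. (fst z j * snd z * hS \<Theta> (fst z))\<^sup>2)"
    and \<Theta>_subset: "\<Theta> \<subseteq> {1..p}"
    and popvar_f_nonzero: "popvar D (\<lambda>z. hS \<Theta> (fst z)) \<noteq> 0"
begin

definition W :: "nat \<Rightarrow> (nat \<Rightarrow> real) \<times> real \<Rightarrow> real" where
  "W j z = fst z j * snd z"

definition f :: "(nat \<Rightarrow> real) \<times> real \<Rightarrow> real" where
  "f z = hS \<Theta> (fst z)"

definition b :: "nat \<Rightarrow> (nat \<Rightarrow> real) \<times> real \<Rightarrow> real" where
  "b j z = W j z * f z"

definition var_f :: real where
  "var_f = popvar D (\<lambda>z. hS \<Theta> (fst z))"

definition A :: "nat \<Rightarrow> nat \<Rightarrow> real" where
  "A j k = (\<integral>z. (fst z j * snd z) * (fst z k * snd z) \<partial>D)"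

definition C :: "nat \<Rightarrow> nat \<Rightarrow> real" where
  "C j k = (\<integral>z. (fst z j * snd z) * (fst z k * snd z) * (hS \<Theta> (fst z))\<^sup>2 \<partial>D)"

definition centred_W :: "nat \<Rightarrow> (nat \<Rightarrow> real) \<times> real \<Rightarrow> real" where
  "centred_W j z = W j z - beta D j"

definition centred_b :: "nat \<Rightarrow> (nat \<Rightarrow> real) \<times> real \<Rightarrow> real" where
  "centred_b j z = b j z - theta D \<Theta> j"

lemma borel_measurable_D: "g \<in> borel_measurable obsM \<Longrightarrow> g \<in> borel_measurable D"
  for g :: "(nat \<Rightarrow> real) \<times> real \<Rightarrow> real"
  by (metis measurable_cong_sets[OF sets_D refl])

lemma integrable_D_of_square:
  fixes g :: "(nat \<Rightarrow> real) \<times> real \<Rightarrow> real"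
  assumes "g \<in> borel_measurable obsM" "integrable D (\<lambda>z. (g z)\<^sup>2)"
  shows "integrable D g"
  using square_integrable_imp_integrable[OF borel_measurable_D] assms by blast

lemma measurable_W [measurable]: "W j \<in> borel_measurable obsM"
  unfolding W_def by measurable

lemma measurable_f [measurable]: "f \<in> borel_measurable obsM"
  unfolding f_def by measurable

lemma measurable_b [measurable]: "b j \<in> borel_measurable obsM"
  unfolding b_def by measurable

lemma measurable_centred_W [measurable]: "centred_W j \<in> borel_measurable obsM"
  unfolding centred_W_def by measurable

lemma measurable_centred_b [measurable]: "centred_b j \<in> borel_measurable obsM"
  unfolding centred_b_def by measurable

lemma square_integrable_W: "j \<in> {1..p} \<Longrightarrow> integrable D (\<lambda>z. (W j z)\<^sup>2)"
  using square_integrable_XY unfolding W_def by simp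

lemma square_integrable_b: "j \<in> {1..p} \<Longrightarrow> integrable D (\<lambda>z. (b j z)\<^sup>2)"
  using square_integrable_XYf unfolding b_def W_def f_def by simp

lemma beta_eq_integral_W: "beta D j = integral\<^sup>L D (W j)"
  unfolding beta_def W_def ..

lemma theta_eq_integral_b: "theta D \<Theta> j = integral\<^sup>L D (b j)"
  unfolding theta_def b_def W_def f_def ..

lemma integral_W_mult: "(\<integral>z. W j z * W k z \<partial>D) = A j k"
  unfolding A_def W_def ..

lemma integral_b_mult: "(\<integral>z. b j z * b k z \<partial>D) = C j k"
  unfolding C_def b_def W_def f_def by (simp add: power2_eq_square ac_simps)

lemma centred_square_integrable:
  fixes g :: "(nat \<Rightarrow> real) \<times> real \<Rightarrow> real"
  assumes "g \<in> borel_measurable obsM" "integrable D (\<lambda>z. (g z)\<^sup>2)"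
  shows "integrable D (\<lambda>z. (g z - integral\<^sup>L D g)\<^sup>2)"
    and "integral\<^sup>L D (\<lambda>z. g z - integral\<^sup>L D g) = 0"
  using variance_le_second_moment(1)[OF borel_measurable_D[OF assms(1)] assms(2)]
    integrable_D_of_square[OF assms] prob_space
  by simp_all

lemma square_integrable_centred_W: "j \<in> {1..p} \<Longrightarrow> integrable D (\<lambda>z. (centred_W j z)\<^sup>2)"
  and mean_centred_W: "j \<in> {1..p} \<Longrightarrow> integral\<^sup>L D (centred_W j) = 0"
  unfolding centred_W_def beta_eq_integral_W
  using centred_square_integrable[OF measurable_W square_integrable_W] by auto

lemma square_integrable_centred_b: "j \<in> {1..p} \<Longrightarrow> integrable D (\<lambda>z. (centred_b j z)\<^sup>2)"
  and mean_centred_b: "j \<in> {1..p} \<Longrightarrow> integral\<^sup>L D (centred_b j) = 0"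
  unfolding centred_b_def theta_eq_integral_b
  using centred_square_integrable[OF measurable_b square_integrable_b] by auto

lemma integral_centred_W_mult:
  "j \<in> {1..p} \<Longrightarrow> k \<in> {1..p} \<Longrightarrow>
    (\<integral>z. centred_W j z * centred_W k z \<partial>D) = A j k - beta D j * beta D k"
  unfolding centred_W_def beta_eq_integral_W integral_W_mult[symmetric]
  by (rule covariance_eq) (auto intro: borel_measurable_D square_integrable_W)

lemma integral_centred_b_mult:
  "j \<in> {1..p} \<Longrightarrow> k \<in> {1..p} \<Longrightarrow>
    (\<integral>z. centred_b j z * centred_b k z \<partial>D) = C j k - theta D \<Theta> j * theta D \<Theta> k"
  unfolding centred_b_def theta_eq_integral_b integral_b_mult[symmetric]
  by (rule covariance_eq) (auto intro: borel_measurable_D square_integrable_b)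

lemma f_eq_sum: "f z = (\<Sum>q\<in>{(j, k). j \<in> \<Theta> \<and> k \<in> \<Theta> \<and> j < k}. fst z (fst q) * fst z (snd q))"
  unfolding f_def hS_def by (simp add: case_prod_beta)

lemma square_integrable_f: "integrable D (\<lambda>z. (f z)\<^sup>2)"
proof -
  have "integrable D (\<lambda>z. (\<Sum>q\<in>{(j, k). j \<in> \<Theta> \<and> k \<in> \<Theta> \<and> j < k}.
      1 * (fst z (fst q) * fst z (snd q)))\<^sup>2)"
  proof (rule integral_square_linear_combination(1))
    show "(\<lambda>z. fst z (fst q) * fst z (snd q)) \<in> borel_measurable D" for q
      by (intro borel_measurable_D) measurable
    show "integrable D (\<lambda>z. (fst z (fst q) * fst z (snd q))\<^sup>2)"
      if "q \<in> {(j, k). j \<in> \<Theta> \<and> k \<in> \<Theta> \<and> j < k}" for q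
      using that \<Theta>_subset by (auto intro!: square_integrable_XX)
  qed
  then show ?thesis unfolding f_eq_sum by simp
qed

lemma mean_f: "integral\<^sup>L D f = 0"
proof -
  have "integrable D (\<lambda>z. fst z j * fst z k) \<and> (\<integral>z. fst z j * fst z k \<partial>D) = 0"
    if "j \<in> \<Theta>" "k \<in> \<Theta>" "j < k" for j k
  proof -
    have "j \<in> {1..p}" "k \<in> {1..p}" using that \<Theta>_subset by auto
    then show ?thesis using second_moment_X that by simp
  qed
  then show ?thesis
    unfolding f_eq_sum by (subst Bochner_Integration.integral_sum) (auto intro!: sum.neutral)
qed

lemma var_f_eq: "var_f = (\<integral>z. (f z)\<^sup>2 \<partial>D)"
  using mean_f unfolding var_f_def popvar_def f_def by simp

lemma var_f_pos: "0 < var_f"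
proof -
  have "0 \<le> var_f" unfolding var_f_eq by (intro integral_nonneg_AE) auto
  moreover have "var_f \<noteq> 0" using popvar_f_nonzero unfolding var_f_def .
  ultimately show ?thesis by simp
qed

definition linear_part :: "(nat \<Rightarrow> real) \<times> real \<Rightarrow> real" where
  "linear_part z = (\<Sum>j\<in>{1..p}. theta D \<Theta> j * centred_W j z + beta D j * centred_b j z)"

lemma measurable_linear_part [measurable]: "linear_part \<in> borel_measurable obsM"
  unfolding linear_part_def by measurable

definition theta_dot_W :: "(nat \<Rightarrow> real) \<times> real \<Rightarrow> real" where
  "theta_dot_W z = (\<Sum>j\<in>{1..p}. theta D \<Theta> j * W j z)"

definition beta_dot_b :: "(nat \<Rightarrow> real) \<times> real \<Rightarrow> real" where
  "beta_dot_b z = (\<Sum>j\<in>{1..p}. beta D j * b j z)"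

lemma measurable_theta_dot_W [measurable]: "theta_dot_W \<in> borel_measurable obsM"
  unfolding theta_dot_W_def by measurable

lemma measurable_beta_dot_b [measurable]: "beta_dot_b \<in> borel_measurable obsM"
  unfolding beta_dot_b_def by measurable

lemma integral_theta_dot_W_square:
  shows "integrable D (\<lambda>z. (theta_dot_W z)\<^sup>2)"
    and "(\<integral>z. (theta_dot_W z)\<^sup>2 \<partial>D) = (\<Sum>j\<in>{1..p}. \<Sum>k\<in>{1..p}. theta D \<Theta> j * theta D \<Theta> k * A j k)"
  unfolding theta_dot_W_def integral_W_mult[symmetric]
  using integral_square_linear_combination[where g = W and J = "{1..p}" and c = "theta D \<Theta>",
      OF borel_measurable_D[OF measurable_W] square_integrable_W]
  by auto

lemma integral_beta_dot_b_square:
  shows "integrable D (\<lambda>z. (beta_dot_b z)\<^sup>2)"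
    and "(\<integral>z. (beta_dot_b z)\<^sup>2 \<partial>D) = (\<Sum>j\<in>{1..p}. \<Sum>k\<in>{1..p}. beta D j * beta D k * C j k)"
  unfolding beta_dot_b_def integral_b_mult[symmetric]
  using integral_square_linear_combination[where g = b and J = "{1..p}" and c = "beta D",
      OF borel_measurable_D[OF measurable_b] square_integrable_b]
  by auto

lemma linear_part_eq:
  "linear_part z
    = (theta_dot_W z - expectation theta_dot_W) + (beta_dot_b z - expectation beta_dot_b)"
proof -
  have "expectation theta_dot_W = (\<Sum>j\<in>{1..p}. theta D \<Theta> j * beta D j)"
    unfolding theta_dot_W_def beta_eq_integral_W
    using integrable_D_of_square[OF measurable_W square_integrable_W]
    by (subst Bochner_Integration.integral_sum) auto
  moreover have "expectation beta_dot_b = (\<Sum>j\<in>{1..p}. beta D j * theta D \<Theta> j)"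
    unfolding beta_dot_b_def theta_eq_integral_b
    using integrable_D_of_square[OF measurable_b square_integrable_b]
    by (subst Bochner_Integration.integral_sum) auto
  ultimately show ?thesis
    unfolding linear_part_def theta_dot_W_def beta_dot_b_def centred_W_def centred_b_def
    by (simp add: sum.distrib sum_subtractf sum_distrib_left algebra_simps)
qed

lemma square_integrable_linear_part: "integrable D (\<lambda>z. (linear_part z)\<^sup>2)"
  and integral_linear_part_square_le: "(\<integral>z. (linear_part z)\<^sup>2 \<partial>D) \<le>
     2 * (\<Sum>j\<in>{1..p}. \<Sum>k\<in>{1..p}. theta D \<Theta> j * theta D \<Theta> k * A j k)
   + 2 * (\<Sum>j\<in>{1..p}. \<Sum>k\<in>{1..p}. beta D j * beta D k * C j k)"
proof -
  have [measurable]: "theta_dot_W \<in> borel_measurable D" "beta_dot_b \<in> borel_measurable D"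
    by (auto intro: borel_measurable_D)
  note var_W = variance_le_second_moment[OF _ integral_theta_dot_W_square(1)]
  note var_b = variance_le_second_moment[OF _ integral_beta_dot_b_square(1)]
  have sum: "integrable D (\<lambda>z. (linear_part z)\<^sup>2)"
    "(\<integral>z. (linear_part z)\<^sup>2 \<partial>D) \<le> 2 * variance theta_dot_W + 2 * variance beta_dot_b"
    unfolding linear_part_eq by (rule integral_square_add_le; use var_W var_b in simp)+
  then show "integrable D (\<lambda>z. (linear_part z)\<^sup>2)" by simp
  show "(\<integral>z. (linear_part z)\<^sup>2 \<partial>D) \<le>
     2 * (\<Sum>j\<in>{1..p}. \<Sum>k\<in>{1..p}. theta D \<Theta> j * theta D \<Theta> k * A j k)
   + 2 * (\<Sum>j\<in>{1..p}. \<Sum>k\<in>{1..p}. beta D j * beta D k * C j k)"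
    using sum(2) var_W(2) var_b(2) integral_theta_dot_W_square(2) integral_beta_dot_b_square(2)
    by simp
qed

lemma mean_linear_part: "expectation linear_part = 0"
  unfolding linear_part_eq
  using integrable_D_of_square[OF measurable_theta_dot_W integral_theta_dot_W_square(1)]
    integrable_D_of_square[OF measurable_beta_dot_b integral_beta_dot_b_square(1)]
  by (simp add: prob_space)

end

section \<open>The estimation error for a fixed sample size\<close>

text \<open>The arguments of \<open>error_rate n a c B t\<close> stand for \<open>\<parallel>A\<parallel>\<^sub>F/n\<close>, \<open>\<parallel>C\<parallel>\<^sub>F/(n Var[f(X)])\<close>,
  \<open>\<parallel>\<beta>\<parallel>\<^sup>2\<close> and \<open>\<parallel>\<theta>\<^sub>f\<parallel>\<^sup>2/Var[f(X)]\<close>.\<close>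

definition error_rate :: "nat \<Rightarrow> real \<Rightarrow> real \<Rightarrow> real \<Rightarrow> real \<Rightarrow> real" where
  "error_rate n a c B t
    = 64 * (a * c) + 64 * (B * t * (1 / real n)\<^sup>2) + 16 * (t * a) + 16 * (B * c)"

lemma tendsto_error_rate:
  fixes a c B t :: "nat \<Rightarrow> real"
  assumes "a \<longlonglongrightarrow> 0" "c \<longlonglongrightarrow> 0" "Bseq B" "Bseq t"
  shows "(\<lambda>n. error_rate n (a n) (c n) (B n) (t n)) \<longlonglongrightarrow> 0"
proof -
  have "(\<lambda>n. a n * c n) \<longlonglongrightarrow> 0" "(\<lambda>n. B n * t n * (1 / real n)\<^sup>2) \<longlonglongrightarrow> 0"
    "(\<lambda>n. t n * a n) \<longlonglongrightarrow> 0" "(\<lambda>n. B n * c n) \<longlonglongrightarrow> 0"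
    using assms lim_1_over_n
    by (auto intro: tendsto_mult_zero Bseq_mult_tendsto_zero Bseq_mult tendsto_power_zero)
  then show ?thesis
    unfolding error_rate_def by (intro tendsto_add_zero tendsto_mult_right_zero)
qed

locale population_sample = iid: iid_sample M obsM D X n + pop: population D p \<Theta>
  for M :: "'a measure" and D X n p \<Theta> +
  assumes two_le_n: "2 \<le> n"
begin

sublocale degenerate_kernel M obsM D X n "{1..p}" pop.centred_W pop.centred_b
  by unfold_locales
    (auto intro: pop.square_integrable_centred_W pop.square_integrable_centred_b
      pop.mean_centred_W pop.mean_centred_b)

text \<open>\<open>coef_error\<close> is \<open>Var[f(X)] (\<hat>c\<^sup>*\<^sub>f - c\<^sup>*\<^sub>f)\<close>, split into its degenerate and linear parts.\<close>

definition coef_error :: "'a \<Rightarrow> real" where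
  "coef_error \<omega> = offdiagonal_sum \<omega> / real (n choose 2)
     + 2 / real n * (\<Sum>i<n. pop.linear_part (X i \<omega>))"

lemma hoeffding_decomposition:
  "(\<Sum>j\<in>{1..p}. (fst x j * snd x) * (fst y j * snd y)) * hS \<Theta> (fst y)
   = kernel x y + (\<Sum>j\<in>{1..p}. theta D \<Theta> j * pop.centred_W j x)
     + (\<Sum>j\<in>{1..p}. beta D j * pop.centred_b j y) + (\<Sum>j\<in>{1..p}. beta D j * theta D \<Theta> j)"
proof -
  have "kernel x y + (\<Sum>j\<in>{1..p}. theta D \<Theta> j * pop.centred_W j x)
      + (\<Sum>j\<in>{1..p}. beta D j * pop.centred_b j y) + (\<Sum>j\<in>{1..p}. beta D j * theta D \<Theta> j)
    = (\<Sum>j\<in>{1..p}. pop.centred_W j x * pop.centred_b j y + theta D \<Theta> j * pop.centred_W j x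
        + beta D j * pop.centred_b j y + beta D j * theta D \<Theta> j)"
    unfolding kernel_def by (simp add: sum.distrib)
  also have "\<dots> = (\<Sum>j\<in>{1..p}. (fst x j * snd x) * (fst y j * snd y) * hS \<Theta> (fst y))"
    unfolding pop.centred_W_def pop.centred_b_def pop.W_def pop.b_def pop.f_def
    by (intro sum.cong refl) (simp add: algebra_simps)
  finally show ?thesis by (simp add: sum_distrib_right)
qed

lemma chat_numerator_eq:
  "(\<Sum>i1<n. \<Sum>i2<n. if i1 \<noteq> i2 then Wdot p (\<lambda>i. X i \<omega>) i1 i2 * hS \<Theta> (fst (X i2 \<omega>)) else 0)
   = offdiagonal_sum \<omega> + (real n - 1) * (\<Sum>i<n. pop.linear_part (X i \<omega>))
     + real n * (real n - 1) * (\<Sum>j\<in>{1..p}. beta D j * theta D \<Theta> j)"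
proof -
  define l1 where "l1 x = (\<Sum>j\<in>{1..p}. theta D \<Theta> j * pop.centred_W j x)" for x
  define l2 where "l2 y = (\<Sum>j\<in>{1..p}. beta D j * pop.centred_b j y)" for y
  define \<kappa> where "\<kappa> = (\<Sum>j\<in>{1..p}. beta D j * theta D \<Theta> j)"
  have "Wdot p (\<lambda>i. X i \<omega>) i1 i2 * hS \<Theta> (fst (X i2 \<omega>))
      = kernel (X i1 \<omega>) (X i2 \<omega>) + l1 (X i1 \<omega>) + l2 (X i2 \<omega>) + \<kappa>" for i1 i2
    unfolding Wdot_def l1_def l2_def \<kappa>_def by (rule hoeffding_decomposition)
  then have "(\<Sum>i1<n. \<Sum>i2<n. if i1 \<noteq> i2 then Wdot p (\<lambda>i. X i \<omega>) i1 i2 * hS \<Theta> (fst (X i2 \<omega>)) else 0)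
    = (\<Sum>i1<n. \<Sum>i2<n. (if i1 \<noteq> i2 then kernel (X i1 \<omega>) (X i2 \<omega>) else 0)
        + (if i1 \<noteq> i2 then l1 (X i1 \<omega>) else 0) + (if i1 \<noteq> i2 then l2 (X i2 \<omega>) else 0)
        + (if i1 \<noteq> i2 then \<kappa> else 0))"
    by (intro sum.cong refl) simp
  also have "\<dots> = offdiagonal_sum \<omega> + (\<Sum>i1<n. \<Sum>i2<n. if i1 \<noteq> i2 then l1 (X i1 \<omega>) else 0)
      + (\<Sum>i1<n. \<Sum>i2<n. if i1 \<noteq> i2 then l2 (X i2 \<omega>) else 0)
      + (\<Sum>i1<n. \<Sum>i2<n. if i1 \<noteq> i2 then \<kappa> else 0)"
    unfolding offdiagonal_sum_def by (simp only: sum.distrib)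
  also have "(\<Sum>i1<n. \<Sum>i2<n. if i1 \<noteq> i2 then l1 (X i1 \<omega>) else 0) = (real n - 1) * (\<Sum>i<n. l1 (X i \<omega>))"
    unfolding sum_distrib_left by (intro sum.cong refl) (simp add: sum_offdiagonal_const)
  also have "(\<Sum>i1<n. \<Sum>i2<n. if i1 \<noteq> i2 then l2 (X i2 \<omega>) else 0) = (real n - 1) * (\<Sum>i<n. l2 (X i \<omega>))"
    unfolding sum_distrib_left
    by (subst sum.swap) (intro sum.cong refl, simp add: sum_offdiagonal_const)
  also have "(\<Sum>i1<n. \<Sum>i2<n. if i1 \<noteq> i2 then \<kappa> else 0) = real n * (real n - 1) * \<kappa>"
    by (simp add: sum_offdiagonal_const)
  finally show ?thesis
    unfolding pop.linear_part_def l1_def l2_def \<kappa>_def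
    by (simp add: sum.distrib algebra_simps)
qed

lemma Thatstat_minus_Tstat:
  "Thatstat D p n \<Theta> (\<lambda>i. X i \<omega>) - Tstat D p n \<Theta> (\<lambda>i. X i \<omega>)
   = - (coef_error \<omega> / pop.var_f) * ((\<Sum>i<n. pop.f (X i \<omega>)) / real n)"
proof -
  have "chat D p n \<Theta> (\<lambda>i. X i \<omega>) - cstar D p \<Theta> = coef_error \<omega> / pop.var_f"
    using two_le_n pop.var_f_pos
    unfolding chat_def cstar_def chat_numerator_eq coef_error_def real_choose_two pop.var_f_def
    by (simp add: field_simps)
  moreover have "Zbar n (hS \<Theta>) (\<lambda>i. X i \<omega>) = (\<Sum>i<n. pop.f (X i \<omega>)) / real n"
    unfolding Zbar_def pop.f_def by simp
  ultimately show ?thesis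
    unfolding Thatstat_def Tstat_def by (simp add: algebra_simps)
qed

lemma measurable_coef_error: "coef_error \<in> borel_measurable M"
proof -
  have "(\<lambda>\<omega>. \<Sum>i<n. pop.linear_part (X i \<omega>)) \<in> borel_measurable M"
    by (intro borel_measurable_sum iid.measurable_sample pop.measurable_linear_part) simp
  then have "(\<lambda>\<omega>. coef_error \<omega>) \<in> borel_measurable M"
    unfolding coef_error_def using measurable_offdiagonal_sum by measurable
  then show ?thesis by simp
qed

lemma integral_coef_error_square_le:
  shows "integrable M (\<lambda>\<omega>. (coef_error \<omega>)\<^sup>2)"
    and "(\<integral>\<omega>. (coef_error \<omega>)\<^sup>2 \<partial>M)
      \<le> 64 / (real n)\<^sup>2 * kernel_moment + 8 / real n * (\<integral>z. (pop.linear_part z)\<^sup>2 \<partial>D)"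
proof -
  define N where "N = real (n choose 2)"
  define L where "L \<omega> = (\<Sum>i<n. pop.linear_part (X i \<omega>))" for \<omega>
  have n: "2 \<le> real n" using two_le_n by simp
  have N: "N = real n * (real n - 1) / 2" unfolding N_def by (rule real_choose_two)
  note offdiag = integral_offdiagonal_sum_square_le[OF two_le_n]
  note linear = iid.integral_square_sum_centered[OF pop.measurable_linear_part
      pop.square_integrable_linear_part pop.mean_linear_part]
  have [measurable]: "offdiagonal_sum \<in> borel_measurable M" "L \<in> borel_measurable M"
    using measurable_offdiagonal_sum unfolding L_def
    by (auto intro!: borel_measurable_sum iid.measurable_sample)
  have int: "integrable M (\<lambda>\<omega>. (offdiagonal_sum \<omega> / N)\<^sup>2)"
    "integrable M (\<lambda>\<omega>. (2 / real n * L \<omega>)\<^sup>2)"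
    using offdiag(1) linear(1) unfolding L_def by (simp_all add: power_divide power_mult_distrib)
  have "(\<integral>\<omega>. (offdiagonal_sum \<omega> / N)\<^sup>2 \<partial>M) = (\<integral>\<omega>. (offdiagonal_sum \<omega>)\<^sup>2 \<partial>M) / N\<^sup>2"
    by (simp add: power_divide)
  also have "\<dots> \<le> 2 * (real n)\<^sup>2 * kernel_moment / N\<^sup>2"
    using offdiag(2) by (intro divide_right_mono) auto
  also have "\<dots> = 8 / (real n - 1)\<^sup>2 * kernel_moment"
  proof -
    have "0 < (real n)\<^sup>2" "0 < (real n - 1)\<^sup>2" using n by auto
    then show ?thesis unfolding N power_divide power_mult_distrib by (simp add: field_simps)
  qed
  also have "\<dots> \<le> 32 / (real n)\<^sup>2 * kernel_moment"
  proof (rule mult_right_mono)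
    have "(real n)\<^sup>2 \<le> (2 * (real n - 1))\<^sup>2"
      using n by (intro power_mono) auto
    then have "32 / (2 * (real n - 1))\<^sup>2 \<le> 32 / (real n)\<^sup>2"
      using n by (intro divide_left_mono) auto
    then show "8 / (real n - 1)\<^sup>2 \<le> 32 / (real n)\<^sup>2"
      unfolding power_mult_distrib by simp
    show "0 \<le> kernel_moment" by (rule kernel_moment_nonneg[OF two_le_n])
  qed
  finally have degenerate: "(\<integral>\<omega>. (offdiagonal_sum \<omega> / N)\<^sup>2 \<partial>M) \<le> 32 / (real n)\<^sup>2 * kernel_moment" .
  have linear_eq: "(\<integral>\<omega>. (2 / real n * L \<omega>)\<^sup>2 \<partial>M) = 4 / real n * (\<integral>z. (pop.linear_part z)\<^sup>2 \<partial>D)"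
    using linear(2) n unfolding L_def by (simp add: power_mult_distrib power2_eq_square field_simps)
  have coef_error_eq: "coef_error = (\<lambda>\<omega>. offdiagonal_sum \<omega> / N + 2 / real n * L \<omega>)"
    unfolding coef_error_def N_def L_def by simp
  have "(\<lambda>\<omega>. offdiagonal_sum \<omega> / N) \<in> borel_measurable M"
    "(\<lambda>\<omega>. 2 / real n * L \<omega>) \<in> borel_measurable M"
    by measurable
  note sum = integral_square_add_le[OF this int]
  show "integrable M (\<lambda>\<omega>. (coef_error \<omega>)\<^sup>2)"
    unfolding coef_error_eq by (rule sum(1))
  show "(\<integral>\<omega>. (coef_error \<omega>)\<^sup>2 \<partial>M)
      \<le> 64 / (real n)\<^sup>2 * kernel_moment + 8 / real n * (\<integral>z. (pop.linear_part z)\<^sup>2 \<partial>D)"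
    unfolding coef_error_eq using sum(2) degenerate linear_eq by simp
qed

lemma kernel_moment_le:
  "kernel_moment \<le> frobenius_norm {1..p} pop.A * frobenius_norm {1..p} pop.C
     + (\<Sum>j\<in>{1..p}. (beta D j)\<^sup>2) * (\<Sum>j\<in>{1..p}. (theta D \<Theta> j)\<^sup>2)"
proof -
  let ?P = "{1..p}"
  have "kernel_moment = (\<Sum>j\<in>?P. \<Sum>k\<in>?P.
      (pop.A j k - beta D j * beta D k) * (pop.C j k - theta D \<Theta> j * theta D \<Theta> k))"
    unfolding kernel_moment_def
    by (intro sum.cong refl) (simp add: pop.integral_centred_W_mult pop.integral_centred_b_mult)
  also have "\<dots> = (\<Sum>j\<in>?P. \<Sum>k\<in>?P. pop.A j k * pop.C j k)
      - (\<Sum>j\<in>?P. \<Sum>k\<in>?P. theta D \<Theta> j * theta D \<Theta> k * pop.A j k)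
      - (\<Sum>j\<in>?P. \<Sum>k\<in>?P. beta D j * beta D k * pop.C j k)
      + (\<Sum>j\<in>?P. \<Sum>k\<in>?P. (beta D j * theta D \<Theta> j) * (beta D k * theta D \<Theta> k))"
    by (simp add: sum.distrib sum_subtractf algebra_simps)
  also have "(\<Sum>j\<in>?P. \<Sum>k\<in>?P. (beta D j * theta D \<Theta> j) * (beta D k * theta D \<Theta> k))
      = (\<Sum>j\<in>?P. beta D j * theta D \<Theta> j)\<^sup>2"
    by (simp add: power2_eq_square sum_product)
  also have "(\<Sum>j\<in>?P. \<Sum>k\<in>?P. theta D \<Theta> j * theta D \<Theta> k * pop.A j k) \<ge> 0"
    unfolding pop.integral_theta_dot_W_square(2)[symmetric] by (intro integral_nonneg_AE) simp
  moreover have "(\<Sum>j\<in>?P. \<Sum>k\<in>?P. beta D j * beta D k * pop.C j k) \<ge> 0"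
    unfolding pop.integral_beta_dot_b_square(2)[symmetric] by (intro integral_nonneg_AE) simp
  moreover have "(\<Sum>j\<in>?P. \<Sum>k\<in>?P. pop.A j k * pop.C j k)
      \<le> frobenius_norm ?P pop.A * frobenius_norm ?P pop.C"
    by (rule double_sum_mult_le_frobenius)
  moreover have "(\<Sum>j\<in>?P. beta D j * theta D \<Theta> j)\<^sup>2
      \<le> (\<Sum>j\<in>?P. (beta D j)\<^sup>2) * (\<Sum>j\<in>?P. (theta D \<Theta> j)\<^sup>2)"
    by (rule Cauchy_Schwarz_ineq_sum)
  ultimately show ?thesis by linarith
qed

lemma coef_error_rate:
  defines "a \<equiv> sqrt ((\<Sum>j\<in>{1..p}. \<Sum>k\<in>{1..p}. (pop.A j k)\<^sup>2) / (real n)\<^sup>2)"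
    and "c \<equiv> sqrt ((\<Sum>j\<in>{1..p}. \<Sum>k\<in>{1..p}. (pop.C j k)\<^sup>2) / (real n * pop.var_f)\<^sup>2)"
    and "B \<equiv> \<Sum>j\<in>{1..p}. (beta D j)\<^sup>2"
    and "t \<equiv> (\<Sum>j\<in>{1..p}. (theta D \<Theta> j)\<^sup>2) / pop.var_f"
  shows "(\<integral>\<omega>. (coef_error \<omega>)\<^sup>2 \<partial>M) / pop.var_f \<le> error_rate n a c B t"
proof -
  let ?P = "{1..p}" and ?V = pop.var_f
  let ?A = "frobenius_norm ?P pop.A" and ?C = "frobenius_norm ?P pop.C"
    and ?T = "\<Sum>j\<in>?P. (theta D \<Theta> j)\<^sup>2"
  have n: "0 < real n" using two_le_n by simp
  have V: "0 < ?V" by (rule pop.var_f_pos)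
  have "0 \<le> (\<Sum>j\<in>?P. \<Sum>k\<in>?P. (pop.A j k)\<^sup>2)" "0 \<le> (\<Sum>j\<in>?P. \<Sum>k\<in>?P. (pop.C j k)\<^sup>2)"
    by (intro sum_nonneg; simp)+
  then have A: "?A = real n * a" and C: "?C = real n * ?V * c"
    using n V unfolding a_def c_def frobenius_norm_def
    by (simp_all add: real_sqrt_divide real_sqrt_mult)
  have T: "?T = t * ?V"
    using V unfolding t_def by simp
  have linear: "(\<integral>z. (pop.linear_part z)\<^sup>2 \<partial>D) \<le> 2 * (?T * ?A) + 2 * (B * ?C)"
    using pop.integral_linear_part_square_le
      quadratic_form_le_frobenius[where t = "theta D \<Theta>" and P = ?P and a = pop.A]
      quadratic_form_le_frobenius[where t = "beta D" and P = ?P and a = pop.C]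
    unfolding B_def by linarith
  have "(\<integral>\<omega>. (coef_error \<omega>)\<^sup>2 \<partial>M)
      \<le> 64 / (real n)\<^sup>2 * (?A * ?C + B * ?T) + 8 / real n * (2 * (?T * ?A) + 2 * (B * ?C))"
    using integral_coef_error_square_le(2)
      mult_left_mono[OF kernel_moment_le[folded B_def], of "64 / (real n)\<^sup>2"]
      mult_left_mono[OF linear, of "8 / real n"]
    by simp
  also have "\<dots> = error_rate n a c B t * ?V"
    unfolding A C T error_rate_def using n by (simp add: field_simps power2_eq_square)
  finally show ?thesis
    using V by (simp add: pos_divide_le_eq)
qed

lemma measurable_Thatstat_minus_Tstat:
  "(\<lambda>\<omega>. Thatstat D p n \<Theta> (\<lambda>i. X i \<omega>) - Tstat D p n \<Theta> (\<lambda>i. X i \<omega>)) \<in> borel_measurable M"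
proof -
  have "(\<lambda>\<omega>. \<Sum>i<n. pop.f (X i \<omega>)) \<in> borel_measurable M"
    by (intro borel_measurable_sum iid.measurable_sample pop.measurable_f) simp
  then show ?thesis
    unfolding Thatstat_minus_Tstat using measurable_coef_error by measurable
qed

lemma prob_Thatstat_minus_Tstat_gt_le:
  assumes "0 < \<epsilon>"
  shows "measure M {\<omega> \<in> space M. \<epsilon> < \<bar>sqrt (real n) *
      (Thatstat D p n \<Theta> (\<lambda>i. X i \<omega>) - Tstat D p n \<Theta> (\<lambda>i. X i \<omega>))\<bar>}
    \<le> sqrt ((\<integral>\<omega>. (coef_error \<omega>)\<^sup>2 \<partial>M) / pop.var_f) / \<epsilon>"
proof -
  let ?V = pop.var_f
  define U where "U \<omega> = coef_error \<omega> / sqrt ?V" for \<omega>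
  define Z where "Z \<omega> = (\<Sum>i<n. pop.f (X i \<omega>)) / sqrt (real n * ?V)" for \<omega>
  have n: "0 < real n" using two_le_n by simp
  have V: "0 < ?V" by (rule pop.var_f_pos)
  note f_sum =
    iid.integral_square_sum_centered[OF pop.measurable_f pop.square_integrable_f pop.mean_f]
  have "(\<lambda>\<omega>. \<Sum>i<n. pop.f (X i \<omega>)) \<in> borel_measurable M"
    by (intro borel_measurable_sum iid.measurable_sample pop.measurable_f) simp
  then have U: "U \<in> borel_measurable M" and Z: "Z \<in> borel_measurable M"
    unfolding U_def[abs_def] Z_def[abs_def] using measurable_coef_error by measurable
  have U2: "integrable M (\<lambda>\<omega>. (U \<omega>)\<^sup>2)" "(\<integral>\<omega>. (U \<omega>)\<^sup>2 \<partial>M) = (\<integral>\<omega>. (coef_error \<omega>)\<^sup>2 \<partial>M) / ?V"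
    unfolding U_def using integral_coef_error_square_le(1) V by (simp_all add: power_divide)
  have Z2: "integrable M (\<lambda>\<omega>. (Z \<omega>)\<^sup>2)" "(\<integral>\<omega>. (Z \<omega>)\<^sup>2 \<partial>M) = 1"
    unfolding Z_def using f_sum n V by (simp_all add: power_divide pop.var_f_eq[symmetric])
  have "sqrt (real n) * (Thatstat D p n \<Theta> (\<lambda>i. X i \<omega>) - Tstat D p n \<Theta> (\<lambda>i. X i \<omega>))
      = - (U \<omega> * Z \<omega>)" for \<omega>
  proof -
    have "sqrt (real n) * sqrt (real n) = real n" "sqrt ?V * sqrt ?V = ?V"
      using n V by simp_all
    then show ?thesis
      unfolding Thatstat_minus_Tstat U_def Z_def real_sqrt_mult using n V
      by (simp add: field_simps)
  qed
  then have "measure M {\<omega> \<in> space M. \<epsilon> < \<bar>sqrt (real n) *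
      (Thatstat D p n \<Theta> (\<lambda>i. X i \<omega>) - Tstat D p n \<Theta> (\<lambda>i. X i \<omega>))\<bar>}
    = measure M {\<omega> \<in> space M. \<epsilon> < \<bar>U \<omega> * Z \<omega>\<bar>}"
    by simp
  also have "\<dots> \<le> sqrt (\<integral>\<omega>. (U \<omega>)\<^sup>2 \<partial>M) * sqrt (\<integral>\<omega>. (Z \<omega>)\<^sup>2 \<partial>M) / \<epsilon>"
    by (rule iid.prob_abs_mult_gt_le[OF U Z U2(1) Z2(1) assms])
  finally show ?thesis unfolding U2(2) Z2(2) by simp
qed

lemma measure_selected_diff_gt_le:
  fixes Sel :: "'a \<Rightarrow> nat set"
  assumes Sel: "{\<omega> \<in> space M. Sel \<omega> = \<Theta>} \<in> sets M" and "0 < \<epsilon>"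
  shows "measure M {\<omega> \<in> space M. \<epsilon> < \<bar>sqrt (real n) *
      (Thatstat D p n (Sel \<omega>) (\<lambda>i. X i \<omega>) - Tstat D p n (Sel \<omega>) (\<lambda>i. X i \<omega>))\<bar>}
    \<le> measure M {\<omega> \<in> space M. Sel \<omega> \<noteq> \<Theta>} + sqrt (error_rate n
      (sqrt ((\<Sum>j\<in>{1..p}. \<Sum>k\<in>{1..p}. (pop.A j k)\<^sup>2) / (real n)\<^sup>2))
      (sqrt ((\<Sum>j\<in>{1..p}. \<Sum>k\<in>{1..p}. (pop.C j k)\<^sup>2) / (real n * pop.var_f)\<^sup>2))
      (\<Sum>j\<in>{1..p}. (beta D j)\<^sup>2) ((\<Sum>j\<in>{1..p}. (theta D \<Theta> j)\<^sup>2) / pop.var_f)) / \<epsilon>"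
proof -
  let ?A = "{\<omega> \<in> space M. Sel \<omega> \<noteq> \<Theta>}"
  let ?B = "{\<omega> \<in> space M. \<epsilon> < \<bar>sqrt (real n) *
      (Thatstat D p n \<Theta> (\<lambda>i. X i \<omega>) - Tstat D p n \<Theta> (\<lambda>i. X i \<omega>))\<bar>}"
  have "?A = space M - {\<omega> \<in> space M. Sel \<omega> = \<Theta>}" by auto
  then have A: "?A \<in> sets M" using Sel by auto
  have B: "?B \<in> sets M"
    using measurable_Thatstat_minus_Tstat by measurable
  have "measure M {\<omega> \<in> space M. \<epsilon> < \<bar>sqrt (real n) *
      (Thatstat D p n (Sel \<omega>) (\<lambda>i. X i \<omega>) - Tstat D p n (Sel \<omega>) (\<lambda>i. X i \<omega>))\<bar>}
    \<le> measure M (?A \<union> ?B)"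
    using A B by (intro iid.finite_measure_mono) auto
  also have "\<dots> \<le> measure M ?A + measure M ?B"
    by (rule measure_Un_le[OF A B])
  also have "measure M ?B \<le> sqrt ((\<integral>\<omega>. (coef_error \<omega>)\<^sup>2 \<partial>M) / pop.var_f) / \<epsilon>"
    by (rule prob_Thatstat_minus_Tstat_gt_le[OF \<open>0 < \<epsilon>\<close>])
  also have "\<dots> \<le> sqrt (error_rate n
      (sqrt ((\<Sum>j\<in>{1..p}. \<Sum>k\<in>{1..p}. (pop.A j k)\<^sup>2) / (real n)\<^sup>2))
      (sqrt ((\<Sum>j\<in>{1..p}. \<Sum>k\<in>{1..p}. (pop.C j k)\<^sup>2) / (real n * pop.var_f)\<^sup>2))
      (\<Sum>j\<in>{1..p}. (beta D j)\<^sup>2) ((\<Sum>j\<in>{1..p}. (theta D \<Theta> j)\<^sup>2) / pop.var_f)) / \<epsilon>"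
    using coef_error_rate \<open>0 < \<epsilon>\<close> by (intro divide_right_mono real_sqrt_le_mono) auto
  finally show ?thesis by simp
qed

end

theorem proposition4:
  fixes M :: "nat \<Rightarrow> 'a measure" and p :: "nat \<Rightarrow> nat"
    and D :: "nat \<Rightarrow> ((nat \<Rightarrow> real) \<times> real) measure"
    and Obs :: "nat \<Rightarrow> nat \<Rightarrow> 'a \<Rightarrow> (nat \<Rightarrow> real) \<times> real"
    and S :: "nat \<Rightarrow> 'a \<Rightarrow> nat set" and \<Theta> :: "nat \<Rightarrow> nat set"
  assumes prob: "\<And>n. prob_space (M n)"
    and D_prob: "\<And>n. prob_space (D n)"
    and D_sets: "\<And>n. sets (D n) = sets obsM"
    and Obs_meas: "\<And>n i. i < n \<Longrightarrow> Obs n i \<in> measurable (M n) obsM"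
    and Obs_indep: "\<And>n. prob_space.indep_vars (M n) (\<lambda>_. obsM) (Obs n) {..<n}"
    and Obs_distr: "\<And>n i. i < n \<Longrightarrow> distr (M n) obsM (Obs n i) = D n"
    and EX: "\<And>n j. j \<in> {1..p n} \<Longrightarrow>
               integrable (D n) (\<lambda>z. fst z j) \<and> (\<integral>z. fst z j \<partial>D n) = 0"
    and VarX: "\<And>n j k. j \<in> {1..p n} \<Longrightarrow> k \<in> {1..p n} \<Longrightarrow>
               integrable (D n) (\<lambda>z. fst z j * fst z k) \<and>
               (\<integral>z. fst z j * fst z k \<partial>D n) = (if j = k then 1 else 0)"
    and EY2: "\<And>n. integrable (D n) (\<lambda>z. (snd z)\<^sup>2)"
    and fin_XX: "\<And>n j k. j \<in> {1..p n} \<Longrightarrow> k \<in> {1..p n} \<Longrightarrow>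
               integrable (D n) (\<lambda>z. (fst z j * fst z k)\<^sup>2)"
    and fin_W: "\<And>n j. j \<in> {1..p n} \<Longrightarrow> integrable (D n) (\<lambda>z. (fst z j * snd z)\<^sup>2)"
    and fin_b: "\<And>n j. j \<in> {1..p n} \<Longrightarrow>
               integrable (D n) (\<lambda>z. (fst z j * snd z * hS (\<Theta> n) (fst z))\<^sup>2)"
    and S_sub: "\<And>n \<omega>. \<omega> \<in> space (M n) \<Longrightarrow> S n \<omega> \<subseteq> {1..p n}"
    and S_meas: "\<And>n Q. {\<omega> \<in> space (M n). S n \<omega> = Q} \<in> sets (M n)"
    and varh_nz: "\<And>n \<omega>. \<omega> \<in> space (M n) \<Longrightarrow> popvar (D n) (\<lambda>z. hS (S n \<omega>) (fst z)) \<noteq> 0"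
    and Theta_sub: "\<And>n. \<Theta> n \<subseteq> {1..p n}"
    and varf_nz: "\<And>n. popvar (D n) (\<lambda>z. hS (\<Theta> n) (fst z)) \<noteq> 0"
    and stable: "(\<lambda>n. real n * sqrt (measure (M n) {\<omega> \<in> space (M n). S n \<omega> \<noteq> \<Theta> n}))
                   \<longlonglongrightarrow> 0"
    and bnd_np: "Bseq (\<lambda>n. real n / real (p n))"
    and bnd_beta: "Bseq (\<lambda>n. \<Sum>j\<in>{1..p n}. (beta (D n) j)\<^sup>2)"
    and bnd_theta: "Bseq (\<lambda>n. (\<Sum>j\<in>{1..p n}. (theta (D n) (\<Theta> n) j)\<^sup>2)
                                / popvar (D n) (\<lambda>z. hS (\<Theta> n) (fst z)))"
    and bnd_b: "Bseq (\<lambda>n. (\<integral>z. (\<Sum>j\<in>{1..p n}. (fst z j * snd z * hS (\<Theta> n) (fst z))\<^sup>2) \<partial>D n)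
                           / (real n * popvar (D n) (\<lambda>z. hS (\<Theta> n) (fst z))))"
    and lim_A: "(\<lambda>n. (\<Sum>j\<in>{1..p n}. \<Sum>k\<in>{1..p n}.
                       (\<integral>z. (fst z j * snd z) * (fst z k * snd z) \<partial>D n)\<^sup>2) / (real n)\<^sup>2)
                 \<longlonglongrightarrow> 0"
    and lim_B: "(\<lambda>n. (\<Sum>j\<in>{1..p n}. \<Sum>k\<in>{1..p n}.
                       (\<integral>z. (fst z j * snd z) * (fst z k * snd z) * hS (\<Theta> n) (fst z) \<partial>D n)\<^sup>2)
                     / ((real n)\<^sup>2 * popvar (D n) (\<lambda>z. hS (\<Theta> n) (fst z))))
                 \<longlonglongrightarrow> 0"
    and lim_C: "(\<lambda>n. (\<Sum>j\<in>{1..p n}. \<Sum>k\<in>{1..p n}.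
                       (\<integral>z. (fst z j * snd z) * (fst z k * snd z) * (hS (\<Theta> n) (fst z))\<^sup>2 \<partial>D n)\<^sup>2)
                     / (real n * popvar (D n) (\<lambda>z. hS (\<Theta> n) (fst z)))\<^sup>2)
                 \<longlonglongrightarrow> 0"
    and mom_Th: "bounded_moments4 M (\<lambda>n \<omega>. Tstat (D n) (p n) n (S n \<omega>) (\<lambda>i. Obs n i \<omega>))"
    and mom_Thhat: "bounded_moments4 M (\<lambda>n \<omega>. Thatstat (D n) (p n) n (S n \<omega>) (\<lambda>i. Obs n i \<omega>))"
    and mom_Tf: "bounded_moments4 M (\<lambda>n \<omega>. Tstat (D n) (p n) n (\<Theta> n) (\<lambda>i. Obs n i \<omega>))"
    and mom_Tfhat: "bounded_moments4 M (\<lambda>n \<omega>. Thatstat (D n) (p n) n (\<Theta> n) (\<lambda>i. Obs n i \<omega>))"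
  shows "\<forall>\<epsilon>>0. (\<lambda>n. measure (M n) {\<omega> \<in> space (M n).
            \<epsilon> < \<bar>sqrt (real n) * (Thatstat (D n) (p n) n (S n \<omega>) (\<lambda>i. Obs n i \<omega>)
                                   - Tstat (D n) (p n) n (S n \<omega>) (\<lambda>i. Obs n i \<omega>))\<bar>})
          \<longlonglongrightarrow> 0"
proof -
  define P where "P \<epsilon> n = measure (M n) {\<omega> \<in> space (M n).
      \<epsilon> < \<bar>sqrt (real n) * (Thatstat (D n) (p n) n (S n \<omega>) (\<lambda>i. Obs n i \<omega>)
                             - Tstat (D n) (p n) n (S n \<omega>) (\<lambda>i. Obs n i \<omega>))\<bar>}" for \<epsilon> n
  define pp where "pp n = measure (M n) {\<omega> \<in> space (M n). S n \<omega> \<noteq> \<Theta> n}" for n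
  define r where "r n = error_rate n
    (sqrt ((\<Sum>j\<in>{1..p n}. \<Sum>k\<in>{1..p n}.
      (\<integral>z. (fst z j * snd z) * (fst z k * snd z) \<partial>D n)\<^sup>2) / (real n)\<^sup>2))
    (sqrt ((\<Sum>j\<in>{1..p n}. \<Sum>k\<in>{1..p n}.
      (\<integral>z. (fst z j * snd z) * (fst z k * snd z) * (hS (\<Theta> n) (fst z))\<^sup>2 \<partial>D n)\<^sup>2)
      / (real n * popvar (D n) (\<lambda>z. hS (\<Theta> n) (fst z)))\<^sup>2))
    (\<Sum>j\<in>{1..p n}. (beta (D n) j)\<^sup>2)
    ((\<Sum>j\<in>{1..p n}. (theta (D n) (\<Theta> n) j)\<^sup>2) / popvar (D n) (\<lambda>z. hS (\<Theta> n) (fst z)))" for n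
  have bound: "P \<epsilon> n \<le> pp n + sqrt (r n) / \<epsilon>" if "0 < \<epsilon>" "2 \<le> n" for \<epsilon> n
  proof -
    interpret population_sample "M n" "D n" "Obs n" n "p n" "\<Theta> n"
      by (intro population_sample.intro iid_sample.intro population.intro population_axioms.intro
          iid_sample_axioms.intro population_sample_axioms.intro)
        (use Theta_sub[of n] in \<open>simp_all add: prob D_prob D_sets Obs_meas Obs_indep Obs_distr
          VarX fin_XX fin_W fin_b varf_nz that\<close>)
    show ?thesis
      using measure_selected_diff_gt_le[OF S_meas that(1)]
      unfolding P_def pp_def r_def pop.A_def pop.C_def pop.var_f_def .
  qed
  have "(\<lambda>n. real n * sqrt (pp n)) \<longlonglongrightarrow> 0"
    using stable by (simp only: pp_def)
  then have "pp \<longlonglongrightarrow> 0"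
    by (rule tendsto_zero_of_real_mult_sqrt[rotated]) (simp add: pp_def)
  moreover have "r \<longlonglongrightarrow> 0"
    unfolding r_def
    by (rule tendsto_error_rate[OF tendsto_real_sqrt[OF lim_A, unfolded real_sqrt_zero]
          tendsto_real_sqrt[OF lim_C, unfolded real_sqrt_zero] bnd_beta bnd_theta])
  ultimately have upper: "(\<lambda>n. pp n + sqrt (r n) / \<epsilon>) \<longlonglongrightarrow> 0" for \<epsilon>
    by (intro tendsto_add_zero tendsto_divide_zero tendsto_real_sqrt[where x = 0, simplified])
  have "P \<epsilon> \<longlonglongrightarrow> 0" if "0 < \<epsilon>" for \<epsilon>
  proof (rule tendsto_sandwich[OF _ _ tendsto_const upper])
    show "\<forall>\<^sub>F n in sequentially. P \<epsilon> n \<le> pp n + sqrt (r n) / \<epsilon>"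
      using eventually_ge_at_top[of 2] by eventually_elim (rule bound[OF that])
  qed (simp add: P_def)
  then show ?thesis
    unfolding P_def by blast
qed

end
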